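(* Under the setting, assumptions (A1)–(A2) and the algorithm PDAc-L described in the context, fix any $(x^\star,y^\star)\in\Omega$ and let $J(x,y)=\mathcal L(x,y^\star)-\mathcal L(x^\star,y)$. Then there exists a constant $C_1>0$ such that for every $N\ge1$, $$J(\hat x_N,\hat y_N)\le \frac{C_1}{N},\qquad\text{where } \hat x_N=\frac{1}{s_N}\sum_{n=1}^N\tau_nx_n,\ \hat y_N=\frac1{s_N}\sum_{n=1}^N\tau_ny_n,\ s_N=\sum_{n=1}^N\tau_n.$$
   Context: Let $f:\mathbb{R}^p\to(-\infty,+\infty]$ and $g:\mathbb{R}^q\to(-\infty,+\infty]$ be proper closed convex functions; $f^*(y)=\sup_u\{\langle y,u\rangle-f(u)\}$ is the Fenchel conjugate, $\mathrm{dom}(h)=\{x:h(x)<+\infty\}$, and for $\lambda>0$, $\mathrm{Prox}_{\lambda h}(x)=\arg\min_u\{h(u)+\frac{1}{2\lambda}\|u-x\|^2\}$. Let $\Phi:\mathrm{dom}(g)\times\mathrm{dom}(f^* )\to\mathbb{R}$ be continuous and $\mathcal L(x,y)=g(x)+\Phi(x,y)-f^*(y)$. Let $\Omega$ be the set of $(x^\star,y^\star)\in\mathrm{dom}(g)\times\mathrm{dom}(f^* )$ with $-\nabla_x\Phi(x^\star,y^\star)\in\partial g(x^\star)$ and $\nabla_y\Phi(x^\star,y^\star)\in\partial f^*(y^\star)$. Assume: (A1) $\Omega\neq\emptyset$, $\mathrm{dom}(g)\times\mathrm{dom}(f^* )\subseteq\mathrm{dom}(\Phi)$, and $\mathcal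 L(x^\star,y^\star)$ is finite; (A2) for each $y\in\mathrm{dom}(f^* )$, $\Phi(\cdot,y)$ is convex and differentiable, for each $x\in\mathrm{dom}(g)$, $\Phi(x,\cdot)$ is concave and differentiable, and for all bounded $\mathcal X\subset\mathbb R^q$, $\mathcal Y\subset\mathbb R^p$ there exist $L_{yy},L_{xx}\ge 0$, $L_{xy}>0$ with $\|\nabla_y\Phi(x,y)-\nabla_y\Phi(x,\tilde y)\|\le L_{yy}\|y-\tilde y\|$ and $\|\nabla_x\Phi(x,y)-\nabla_x\Phi(\tilde x,\tilde y)\|\le L_{xx}\|x-\tilde x\|+L_{xy}\|y-\tilde y\|$ for all $x,\tilde x\in\mathcal X\cap\mathrm{dom}(g)$, $y,\tilde y\in\mathcal Y\cap\mathrm{dom}(f^* )$. Algorithm PDAc-L: choose $\psi\in(1,1+\sqrt3)$, $\xi>0$, $\varphi>1$ with $\omega:=2\psi-\xi-\frac{\psi^3\varphi}{1+\psi}>0$, $\tau_{\max}>0$, $\nu\in(0,1)$, $\mu\in(0,1)$, $\eta\in[0,1)$, an integer $M\ge1$, $\beta>0$, $x_0\in\mathrm{dom}(g)$, $y_0\in\mathrm{dom}(f^* )$, $\tau_0\in(0,\tau_{\max}]$; set $z_0=x_0$, $\delta_0=1$. For $n=1,2,\dots$: (1) $z_n=\frac{\psi-1}{\psi}x_{n-1}+\frac1\psi z_{n-1}$ and $x_n=\mathrm{Prox}_{\tau_{n-1}g}(z_n-\tau_{n-1}\nabla_x\Phi(x_{n-1},y_{n-1}))$. (2) Let $\tau=\min\{\varphi\tau_{n-1},\tau_{\max}\}$;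 set $\tau_n=\tau\mu^i$ and $y_n=\mathrm{Prox}_{\beta\tau_n f^*}(y_{n-1}+\beta\tau_n\nabla_y\Phi(x_n,y_{n-1}))$, where $i$ is the smallest nonnegative integer such that $\frac{\tau_n\tau_{n-1}}{\xi}\|\theta_n\|^2+2\tau_n\Phi_n^y\le\nu r_n+(1-\nu)c_n$, with $\theta_n=\nabla_x\Phi(x_n,y_n)-\nabla_x\Phi(x_{n-1},y_{n-1})$, $\Phi_n^y=\Phi(x_n,y_{n-1})+\langle\nabla_y\Phi(x_n,y_{n-1}),y_n-y_{n-1}\rangle-\Phi(x_n,y_n)$, $r_n=\omega\delta_{n-1}\|x_n-x_{n-1}\|^2+\frac1\beta\|y_n-y_{n-1}\|^2$, $c_n=\frac{\eta}{|\mathcal I_n|}\sum_{i\in\mathcal I_n}r_i$, $\mathcal I_n=\{n-1,n-2,\dots,\max\{n-M,1\}\}$ (the $r_i$ for $i<n$ being the values from earlier iterations; for $n=1$, $\mathcal I_1=\emptyset$ and $c_1:=0$). (3) $\delta_n=\tau_n/\tau_{n-1}$. *)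

theory Defs
  imports "HOL-Analysis.Analysis" "HOL-Library.Extended_Real"
begin

definition edom :: "('a \<Rightarrow> ereal) \<Rightarrow> 'a set" where
  "edom h = {x. h x < \<infinity>}"

definition proper_fn :: "('a \<Rightarrow> ereal) \<Rightarrow> bool" where
  "proper_fn h \<longleftrightarrow> (\<forall>x. h x \<noteq> -\<infinity>) \<and> (\<exists>x. h x < \<infinity>)"

text \<open>closed = lower semicontinuous = closed epigraph; convex = convex epigraph\<close>
definition closed_fn :: "('a::topological_space \<Rightarrow> ereal) \<Rightarrow> bool" where
  "closed_fn h \<longleftrightarrow> closed {(x, t::real). h x \<le> ereal t}"

definition convex_fn :: "('a::real_vector \<Rightarrow> ereal) \<Rightarrow> bool" where
  "convex_fn h \<longleftrightarrow> convex {(x, t::real). h x \<le> ereal t}"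

definition fconj :: "('a::real_inner \<Rightarrow> ereal) \<Rightarrow> 'a \<Rightarrow> ereal" where
  "fconj f y = (SUP u. ereal (inner y u) - f u)"

definition subdiff :: "('a::real_inner \<Rightarrow> ereal) \<Rightarrow> 'a \<Rightarrow> 'a set" where
  "subdiff h x = {v. \<forall>z. h x + ereal (inner v (z - x)) \<le> h z}"

definition prox :: "real \<Rightarrow> ('a::real_normed_vector \<Rightarrow> ereal) \<Rightarrow> 'a \<Rightarrow> 'a" where
  "prox lam h x = (SOME u. \<forall>v. h u + ereal ((norm (u - x))\<^sup>2 / (2 * lam))
                               \<le> h v + ereal ((norm (v - x))\<^sup>2 / (2 * lam)))"

text \<open>Lagrangian L(x,y) = g(x) + Phi(x,y) - f*(y), with fs = f*\<close>
definition Lag :: "('a \<Rightarrow> ereal) \<Rightarrow> ('b \<Rightarrow> ereal) \<Rightarrow> ('a \<Rightarrow> 'b \<Rightarrow> real) \<Rightarrow> 'a \<Rightarrow> 'b \<Rightarrow> ereal" where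
  "Lag g fs Phi x y = g x + ereal (Phi x y) - fs y"

text \<open>Saddle set Omega; Phix, Phiy are the partial gradients of Phi\<close>
definition saddle_set :: "('a::real_inner \<Rightarrow> ereal) \<Rightarrow> ('b::real_inner \<Rightarrow> ereal)
    \<Rightarrow> ('a \<Rightarrow> 'b \<Rightarrow> 'a) \<Rightarrow> ('a \<Rightarrow> 'b \<Rightarrow> 'b) \<Rightarrow> ('a \<times> 'b) set" where
  "saddle_set g fs Phix Phiy =
     {(xs, ys). xs \<in> edom g \<and> ys \<in> edom fs \<and>
        - Phix xs ys \<in> subdiff g xs \<and> Phiy xs ys \<in> subdiff fs ys}"

text \<open>The iterates (x_n, y_n, z_n, tau_n) are generated by PDAc-L (steps (1)-(3)),
  with fs = f*, omega = 2 psi - xi - psi^3 phi/(1+psi), delta_0 = 1, delta_n = tau_n/tau_{n-1}.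
  The initial data x 0, y 0, tau 0 are free here (constrained in the theorem).\<close>
definition pdacl :: "('a::euclidean_space \<Rightarrow> ereal) \<Rightarrow> ('b::euclidean_space \<Rightarrow> ereal)
   \<Rightarrow> ('a \<Rightarrow> 'b \<Rightarrow> real) \<Rightarrow> ('a \<Rightarrow> 'b \<Rightarrow> 'a) \<Rightarrow> ('a \<Rightarrow> 'b \<Rightarrow> 'b)
   \<Rightarrow> real \<Rightarrow> real \<Rightarrow> real \<Rightarrow> real \<Rightarrow> real \<Rightarrow> real \<Rightarrow> real \<Rightarrow> nat \<Rightarrow> real
   \<Rightarrow> (nat \<Rightarrow> 'a) \<Rightarrow> (nat \<Rightarrow> 'b) \<Rightarrow> (nat \<Rightarrow> 'a) \<Rightarrow> (nat \<Rightarrow> real) \<Rightarrow> bool" where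
  "pdacl g fs Phi Phix Phiy psi xi phi taumax nu mu eta M beta x y z tau \<longleftrightarrow>
   (let omega = 2 * psi - xi - psi ^ 3 * phi / (1 + psi);
        delta = (\<lambda>k. if k = 0 then 1 else tau k / tau (k - 1));
        ytr = (\<lambda>n t. prox (beta * t) fs (y (n - 1) + (beta * t) *\<^sub>R Phiy (x n) (y (n - 1))));
        rr = (\<lambda>n v. omega * delta (n - 1) * (norm (x n - x (n - 1)))\<^sup>2
                     + (1 / beta) * (norm (v - y (n - 1)))\<^sup>2);
        II = (\<lambda>n. {max (n - M) 1 .. n - 1});
        cc = (\<lambda>n. if n = 1 then 0
                  else eta / real (card (II n)) * (\<Sum>k\<in>II n. rr k (y k)));
        ok = (\<lambda>n t. let v = ytr n t;
                        theta = Phix (x n) v - Phix (x (n - 1)) (y (n - 1));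
                        Py = Phi (x n) (y (n - 1)) + inner (Phiy (x n) (y (n - 1))) (v - y (n - 1))
                             - Phi (x n) v
                    in t * tau (n - 1) / xi * (norm theta)\<^sup>2 + 2 * t * Py
                         \<le> nu * rr n v + (1 - nu) * cc n);
        tbar = (\<lambda>n. min (phi * tau (n - 1)) taumax)
    in z 0 = x 0 \<and>
       (\<forall>n\<ge>1.
          z n = ((psi - 1) / psi) *\<^sub>R x (n - 1) + (1 / psi) *\<^sub>R z (n - 1) \<and>
          x n = prox (tau (n - 1)) g (z n - tau (n - 1) *\<^sub>R Phix (x (n - 1)) (y (n - 1))) \<and>
          (\<exists>i::nat. tau n = tbar n * mu ^ i \<and> ok n (tau n) \<and>
                    (\<forall>j<i. \<not> ok n (tbar n * mu ^ j))) \<and>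
          y n = ytr n (tau n)))"

end

theory Submission
  imports Defs
begin

(* Along a run, the energy
     E_n = psi/(psi-1) |z_(n+1) - x*|^2 + |y_(n-1) - y*|^2 / beta
   satisfies 2 tau_n J(x_n, y_n) + E_(n+1) + (squared step lengths) <= E_n + nu r_n + (1 - nu) c_n:
   the prox inequalities of both steps, the extrapolation rule for z and the convexity-concavity
   of Phi control everything except two cross terms, and these are exactly what the linesearch
   test bounds. Summing, the nonmonotone averages c_n are dominated by the residuals r_n, which
   the squared step lengths absorb, so sum tau_n J(x_n, y_n) and E_n stay bounded, and with them
   the iterates. On that bounded set the gradients of Phi are Lipschitz, hence every step below a
   fixed threshold passes the test and backtracking keeps tau_n >= tau_min > 0, i.e.
   s_N >= N tau_min. Jensen's inequality for the convex-concave J finishes: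
   J(xh_N, yh_N) <= (sum tau_n J(x_n, y_n)) / s_N <= C / N. *)

section \<open>Elementary inequalities\<close>

lemma power2_norm_add:
  fixes a b :: "'a::real_inner"
  shows "(norm (a + b))\<^sup>2 = (norm a)\<^sup>2 + 2 * inner a b + (norm b)\<^sup>2"
  by (simp add: power2_norm_eq_inner inner_add_left inner_add_right inner_commute)

lemma power2_norm_convex_combination:
  fixes a b :: "'a::real_inner"
  shows "(norm ((1 - t) *\<^sub>R a + t *\<^sub>R b))\<^sup>2
           = (1 - t) * (norm a)\<^sup>2 + t * (norm b)\<^sup>2 - t * (1 - t) * (norm (a - b))\<^sup>2"
  by (simp add: power2_norm_eq_inner inner_add_left inner_add_right inner_diff_left inner_diff_right
      inner_commute algebra_simps)

lemma neg_inner_le_Young: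
  fixes p q :: "'a::real_inner"
  assumes k: "k > 0"
  shows "- inner p q \<le> (k / 2) * (norm p)\<^sup>2 + (1 / (2 * k)) * (norm q)\<^sup>2"
proof -
  have "0 \<le> (norm (k *\<^sub>R p + q))\<^sup>2" by simp
  also have "\<dots> = k\<^sup>2 * (norm p)\<^sup>2 + 2 * k * inner p q + (norm q)\<^sup>2"
    by (simp add: power2_norm_add power_mult_distrib)
  finally have "(2 * k) * (- inner p q) \<le> (2 * k) * ((k / 2) * (norm p)\<^sup>2 + (1 / (2 * k)) * (norm q)\<^sup>2)"
    using k by (simp add: algebra_simps power2_eq_square)
  thus ?thesis using k by (simp only: mult_le_cancel_left_pos)
qed

lemma le_if_le_add_small_multiples:
  fixes X Y Z :: real
  assumes "\<And>s. 0 < s \<Longrightarrow> s \<le> 1 \<Longrightarrow> X \<le> Y + s * Z"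
  shows "X \<le> Y"
proof -
  have "((\<lambda>s. Y + s * Z) \<longlongrightarrow> Y + 0 * Z) (at_right 0)"
    by (intro tendsto_intros)
  moreover have "eventually (\<lambda>s. X \<le> Y + s * Z) (at_right (0::real))"
    unfolding eventually_at_right_field using assms by (intro exI[of _ 1]) auto
  ultimately show ?thesis
    by (simp add: tendsto_lowerbound)
qed

lemma le_of_square_le_linear:
  fixes r A B :: real
  assumes "0 \<le> r" "0 \<le> A" "r\<^sup>2 \<le> A * r + B"
  shows "r \<le> A + \<bar>B\<bar> + 1"
proof (rule ccontr)
  assume "\<not> ?thesis"
  hence "A + \<bar>B\<bar> + 1 < r" by simp
  hence "r * (A + \<bar>B\<bar> + 1) \<le> r * r" and "1 * (\<bar>B\<bar> + 1) \<le> r * (\<bar>B\<bar> + 1)"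
    using assms(1,2) by (intro mult_left_mono mult_right_mono; simp)+
  thus False using assms(3) by (simp add: power2_eq_square algebra_simps)
qed

lemma convex_on_gradient_inequality:
  fixes F :: "'a::real_inner \<Rightarrow> real"
  assumes cv: "convex_on S F" and u: "u \<in> S" and w: "w \<in> S"
    and der: "(F has_derivative (\<lambda>h. inner D h)) (at u)"
  shows "F u + inner D (w - u) \<le> F w"
proof -
  define d where "d = w - u"
  have "((\<lambda>s::real. u + s *\<^sub>R d) has_derivative (\<lambda>s. s *\<^sub>R d)) (at 0)"
    by (auto intro!: derivative_eq_intros)
  moreover have "(F has_derivative (\<lambda>h. inner D h)) (at (u + 0 *\<^sub>R d))"
    using der by simp
  ultimately have "((\<lambda>s::real. F (u + s *\<^sub>R d)) has_derivative (\<lambda>s. inner D (s *\<^sub>R d))) (at 0)"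
    by (rule has_derivative_compose)
  hence "((\<lambda>s::real. F (u + s *\<^sub>R d)) has_real_derivative inner D d) (at 0)"
    unfolding has_field_derivative_def by (rule has_derivative_eq_rhs) (auto simp: fun_eq_iff)
  hence "((\<lambda>s. (F (u + s *\<^sub>R d) - F u) / s) \<longlongrightarrow> inner D d) (at_right 0)"
    by (simp add: has_field_derivative_iff filterlim_at_split)
  moreover have "eventually (\<lambda>s. (F (u + s *\<^sub>R d) - F u) / s \<le> F w - F u) (at_right (0::real))"
    unfolding eventually_at_right_field
  proof (intro exI[of _ 1] conjI allI impI)
    fix s :: real assume s: "0 < s" "s < 1"
    moreover have "u + s *\<^sub>R d = (1 - s) *\<^sub>R u + s *\<^sub>R w" by (simp add: d_def algebra_simps)
    ultimately have "F (u + s *\<^sub>R d) \<le> (1 - s) * F u + s * F w"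
      using convex_onD[OF cv, of s u w] u w by simp
    hence "F (u + s *\<^sub>R d) - F u \<le> (F w - F u) * s"
      by (simp add: algebra_simps)
    with s show "(F (u + s *\<^sub>R d) - F u) / s \<le> F w - F u"
      by (simp add: divide_le_eq)
  qed simp
  ultimately have "inner D d \<le> F w - F u"
    by (rule tendsto_upperbound) simp
  thus ?thesis by (simp add: d_def)
qed

lemma concave_on_gradient_inequality:
  fixes F :: "'a::real_inner \<Rightarrow> real"
  assumes cv: "concave_on S F" and u: "u \<in> S" and w: "w \<in> S"
    and der: "(F has_derivative (\<lambda>h. inner D h)) (at u)"
  shows "F w \<le> F u + inner D (w - u)"
proof -
  have "((\<lambda>x. - F x) has_derivative (\<lambda>h. inner (- D) h)) (at u)"
    using has_derivative_minus[OF der] by simp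
  from convex_on_gradient_inequality[OF cv[unfolded concave_on_def] u w this] show ?thesis
    by simp
qed

lemma concave_linearization_gap_le:
  fixes F :: "'a::real_inner \<Rightarrow> real"
  assumes cv: "concave_on S F" and v: "v \<in> S" and v0: "v0 \<in> S"
    and der: "(F has_derivative (\<lambda>h. inner D h)) (at v)"
  shows "F v0 + inner D0 (v - v0) - F v \<le> norm (D0 - D) * norm (v - v0)"
proof -
  have "F v0 + inner D0 (v - v0) - F v \<le> inner (D0 - D) (v - v0)"
    using concave_on_gradient_inequality[OF cv v v0 der]
    by (simp add: inner_diff_left inner_diff_right algebra_simps)
  also have "\<dots> \<le> norm (D0 - D) * norm (v - v0)" by (rule norm_cauchy_schwarz)
  finally show ?thesis .
qed

section \<open>Proper closed convex functions and the proximal map\<close>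

lemma proper_fn_finite_on_edom:
  assumes "proper_fn h" "u \<in> edom h"
  shows "h u = ereal (real_of_ereal (h u))"
proof -
  have "h u \<noteq> - \<infinity>" using assms(1) unfolding proper_fn_def by auto
  thus ?thesis using assms(2) unfolding edom_def by (cases "h u") auto
qed

lemma convex_fn_combination:
  fixes h :: "'a::real_vector \<Rightarrow> ereal"
  assumes cv: "convex_fn h" and "h p = ereal P" "h v = ereal V" "0 \<le> s" "s \<le> 1"
  shows "h ((1 - s) *\<^sub>R p + s *\<^sub>R v) \<le> ereal ((1 - s) * P + s * V)"
proof -
  have "(p, P) \<in> {(x, t::real). h x \<le> ereal t}" "(v, V) \<in> {(x, t::real). h x \<le> ereal t}"
    using assms by auto
  from convexD[OF cv[unfolded convex_fn_def] this, of "1 - s" s] assms(4,5)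
  show ?thesis by simp
qed

lemma convex_fn_jensen:
  fixes h :: "'a::real_vector \<Rightarrow> ereal"
  assumes pr: "proper_fn h" and cv: "convex_fn h" and fin: "finite S"
    and w1: "(\<Sum>i\<in>S. w i) = 1" and w0: "\<And>i. i \<in> S \<Longrightarrow> w i \<ge> 0"
    and p: "\<And>i. i \<in> S \<Longrightarrow> p i \<in> edom h"
  shows "h (\<Sum>i\<in>S. w i *\<^sub>R p i) \<le> ereal (\<Sum>i\<in>S. w i * real_of_ereal (h (p i)))"
proof -
  let ?E = "{(x, t::real). h x \<le> ereal t}"
  have "(p i, real_of_ereal (h (p i))) \<in> ?E" if "i \<in> S" for i
    using proper_fn_finite_on_edom[OF pr p[OF that]] by simp
  hence "(\<Sum>i\<in>S. w i *\<^sub>R (p i, real_of_ereal (h (p i)))) \<in> ?E"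
    by (intro convex_sum[OF fin cv[unfolded convex_fn_def] w1 w0])
  moreover have "(\<Sum>i\<in>S. w i *\<^sub>R (p i, real_of_ereal (h (p i))))
      = ((\<Sum>i\<in>S. w i *\<^sub>R p i), (\<Sum>i\<in>S. w i * real_of_ereal (h (p i))))"
    by (simp add: prod_eq_iff fst_sum snd_sum)
  ultimately show ?thesis by simp
qed

lemma subdiff_affine_minorant:
  assumes "v \<in> subdiff h x" "h x = ereal c"
  shows "ereal (inner v u + (c - inner v x)) \<le> h u"
proof -
  have "h x + ereal (inner v (u - x)) \<le> h u" using assms(1) unfolding subdiff_def by blast
  thus ?thesis using assms(2) by (simp add: inner_diff_right algebra_simps)
qed

lemma fconj_epigraph_eq_Inter_halfspaces:
  fixes f :: "'a::real_inner \<Rightarrow> ereal"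
  assumes "proper_fn f"
  shows "{(y, t::real). fconj f y \<le> ereal t}
           = (\<Inter>u\<in>edom f. {p. inner (u, -1::real) p \<le> real_of_ereal (f u)})"
proof -
  have "ereal (inner y u) - f u \<le> ereal t \<longleftrightarrow> inner (u, -1::real) (y, t) \<le> real_of_ereal (f u)"
    if u: "u \<in> edom f" for y u t
  proof -
    obtain r where "f u = ereal r" using proper_fn_finite_on_edom[OF assms u] by blast
    thus ?thesis by (auto simp: inner_commute)
  qed
  moreover have "ereal (inner y u) - f u \<le> ereal t" if "u \<notin> edom f" for y u t
    using that unfolding edom_def by auto
  ultimately have "fconj f y \<le> ereal t
      \<longleftrightarrow> (\<forall>u\<in>edom f. inner (u, -1::real) (y, t) \<le> real_of_ereal (f u))" for y t
    unfolding fconj_def SUP_le_iff by blast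
  thus ?thesis by auto
qed

lemma closed_fn_fconj: "proper_fn f \<Longrightarrow> closed_fn (fconj f)"
  unfolding closed_fn_def
  by (subst fconj_epigraph_eq_Inter_halfspaces) (auto intro!: closed_INT closed_halfspace_le)

lemma convex_fn_fconj: "proper_fn f \<Longrightarrow> convex_fn (fconj f)"
  unfolding convex_fn_def
  by (subst fconj_epigraph_eq_Inter_halfspaces) (auto intro!: convex_INT convex_halfspace_le)

lemma proper_fn_fconj:
  assumes "proper_fn f" "y0 \<in> edom (fconj f)"
  shows "proper_fn (fconj f)"
proof -
  obtain u0 where "u0 \<in> edom f" using assms(1) unfolding proper_fn_def edom_def by auto
  hence fu0: "f u0 = ereal (real_of_ereal (f u0))" by (rule proper_fn_finite_on_edom[OF assms(1)])
  have "ereal (inner y u0) - f u0 \<le> fconj f y" for y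
    unfolding fconj_def by (rule SUP_upper) simp
  hence "fconj f y \<noteq> - \<infinity>" for y
    by (metis fu0 ereal_minus(1) MInfty_neq_ereal(1) ereal_infty_less_eq(2))
  thus ?thesis unfolding proper_fn_def using assms(2) unfolding edom_def by auto
qed

lemma bounded_epigraph_sublevel:
  fixes h :: "'a::real_inner \<Rightarrow> ereal"
  assumes lam: "lam > 0" and minor: "\<And>u. ereal (inner a u + b) \<le> h u"
  shows "bounded ({(u, t). h u \<le> ereal t} \<inter> {p. snd p + (norm (fst p - c))\<^sup>2 / (2 * lam) \<le> K})"
proof -
  define R where "R = 2 * lam * norm a + \<bar>2 * lam * (K - b + norm a * norm c)\<bar> + 1"
  define B where "B = (R + norm c) + (\<bar>K\<bar> + norm a * (R + norm c) + \<bar>b\<bar>)"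
  have "norm (u, t) \<le> B"
    if ht: "h u \<le> ereal t" and tK: "t + (norm (u - c))\<^sup>2 / (2 * lam) \<le> K" for u t
  proof -
    define r where "r = norm (u - c)"
    have low: "inner a u + b \<le> t" using order.trans[OF minor ht] by simp
    have u_le: "norm u \<le> r + norm c" unfolding r_def using norm_triangle_ineq[of "u - c" c] by simp
    have "- (norm a * norm u) \<le> inner a u"
      using Cauchy_Schwarz_ineq2[of a u] by linarith
    hence "r\<^sup>2 / (2 * lam) \<le> K - b + norm a * (r + norm c)"
      using low tK mult_left_mono[OF u_le, of "norm a"] unfolding r_def by auto
    hence "r\<^sup>2 \<le> (K - b + norm a * (r + norm c)) * (2 * lam)"
      using lam by (subst (asm) pos_divide_le_eq) auto
    hence "r\<^sup>2 \<le> (2 * lam * norm a) * r + 2 * lam * (K - b + norm a * norm c)"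
      by (simp add: algebra_simps)
    hence "r \<le> R" unfolding R_def
      by (rule le_of_square_le_linear[rotated 2]) (use lam in \<open>auto simp: r_def\<close>)
    hence u_le_R: "norm u \<le> R + norm c" using u_le by linarith
    have "\<bar>inner a u\<bar> \<le> norm a * (R + norm c)"
      using Cauchy_Schwarz_ineq2[of a u] mult_left_mono[OF u_le_R, of "norm a"] by simp
    moreover have "0 \<le> (norm (u - c))\<^sup>2 / (2 * lam)" using lam by simp
    ultimately have "\<bar>t\<bar> \<le> \<bar>K\<bar> + norm a * (R + norm c) + \<bar>b\<bar>" using tK low by linarith
    thus ?thesis using norm_Pair_le[of u t] u_le_R unfolding B_def by simp
  qed
  thus ?thesis unfolding bounded_iff by (intro exI[of _ B]) auto
qed

(* t + |u - c|^2 / (2 lam) attains its minimum on a sublevel set of the epigraph, which is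
   closed and, thanks to the affine minorant, bounded. *)
lemma prox_minimizer_exists:
  fixes h :: "'a::euclidean_space \<Rightarrow> ereal"
  assumes pr: "proper_fn h" and cl: "closed_fn h" and lam: "lam > 0"
    and minor: "\<And>u. ereal (inner a u + b) \<le> h u"
  shows "\<exists>p. \<forall>v. h p + ereal ((norm (p - c))\<^sup>2 / (2 * lam))
                   \<le> h v + ereal ((norm (v - c))\<^sup>2 / (2 * lam))"
proof -
  define q where "q v = (norm (v - c))\<^sup>2 / (2 * lam)" for v
  obtain u0 where "u0 \<in> edom h" using pr unfolding proper_fn_def edom_def by auto
  then obtain h0 where h0: "h u0 = ereal h0" using proper_fn_finite_on_edom[OF pr] by blast
  define C where "C = {(u, t). h u \<le> ereal t} \<inter> {p. snd p + q (fst p) \<le> h0 + q u0}"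
  have "continuous_on UNIV (\<lambda>p::'a \<times> real. snd p + q (fst p))"
    unfolding q_def using lam by (intro continuous_intros) auto
  hence cont: "continuous_on C (\<lambda>p. snd p + q (fst p))"
    by (rule continuous_on_subset) simp
  have "closed C" unfolding C_def using cl lam unfolding closed_fn_def
    by (intro closed_Int closed_Collect_le) (auto simp: q_def intro!: continuous_intros)
  moreover have "bounded C"
    unfolding C_def q_def by (rule bounded_epigraph_sublevel[OF lam minor])
  moreover have "(u0, h0) \<in> C" unfolding C_def using h0 by auto
  ultimately obtain p1 where p1: "p1 \<in> C" and p1min: "\<And>p. p \<in> C \<Longrightarrow> snd p1 + q (fst p1) \<le> snd p + q (fst p)"
    using continuous_attains_inf[OF _ _ cont] by (metis compact_eq_bounded_closed empty_iff)
  obtain u1 t1 where p1': "p1 = (u1, t1)" by (cases p1)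
  have hu1: "h u1 \<le> ereal t1" and t1K: "t1 + q u1 \<le> h0 + q u0" using p1 unfolding C_def p1' by auto
  have "h u1 + ereal (q u1) \<le> h v + ereal (q v)" for v
  proof (cases "h v")
    case (real hv)
    have "t1 + q u1 \<le> hv + q v"
      using p1min[of "(v, hv)"] t1K real unfolding C_def p1' by (cases "hv + q v \<le> h0 + q u0") auto
    hence "ereal t1 + ereal (q u1) \<le> h v + ereal (q v)" using real by simp
    thus ?thesis using hu1 by (meson add_right_mono order.trans)
  next
    case MInf
    thus ?thesis using pr unfolding proper_fn_def by auto
  qed simp
  thus ?thesis unfolding q_def by blast
qed

lemma prox_minimizer_vi:
  fixes h :: "'a::real_inner \<Rightarrow> ereal"
  assumes pr: "proper_fn h" and cv: "convex_fn h" and lam: "lam > 0"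
    and pmin: "\<And>v. h p + ereal ((norm (p - c))\<^sup>2 / (2 * lam)) \<le> h v + ereal ((norm (v - c))\<^sup>2 / (2 * lam))"
  shows "p \<in> edom h"
    and "v \<in> edom h \<Longrightarrow> inner (c - p) (v - p) \<le> lam * (real_of_ereal (h v) - real_of_ereal (h p))"
proof -
  define q where "q v = (norm (v - c))\<^sup>2 / (2 * lam)" for v
  obtain u0 where "h u0 < \<infinity>" using pr unfolding proper_fn_def by auto
  hence "h p + ereal (q p) < \<infinity>" using pmin[of u0] unfolding q_def by (auto simp: order.strict_trans1)
  thus p: "p \<in> edom h" unfolding edom_def by auto
  then obtain P where P: "h p = ereal P" using proper_fn_finite_on_edom[OF pr] by blast
  assume "v \<in> edom h"
  then obtain V where V: "h v = ereal V" using proper_fn_finite_on_edom[OF pr] by blast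
  have "lam * (P - V) \<le> inner (p - c) (v - p) + s * ((norm (v - p))\<^sup>2 / 2)"
    if s: "0 < s" "s \<le> 1" for s
  proof -
    define us where "us = (1 - s) *\<^sub>R p + s *\<^sub>R v"
    have "h us \<le> ereal ((1 - s) * P + s * V)"
      unfolding us_def using convex_fn_combination[OF cv P V] s by auto
    hence "h p + ereal (q p) \<le> ereal ((1 - s) * P + s * V) + ereal (q us)"
      using pmin[of us] unfolding q_def by (meson add_right_mono order.trans)
    hence "P + q p \<le> (1 - s) * P + s * V + q us" using P by simp
    moreover have "us - c = (p - c) + s *\<^sub>R (v - p)" unfolding us_def by (simp add: algebra_simps)
    hence "q us = q p + (2 * s * inner (p - c) (v - p) + s\<^sup>2 * (norm (v - p))\<^sup>2) / (2 * lam)"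
      unfolding q_def by (subst \<open>us - c = _\<close>, subst power2_norm_add)
        (simp add: power_mult_distrib add_divide_distrib)
    ultimately have "s * (lam * (P - V)) \<le> s * (inner (p - c) (v - p) + s * ((norm (v - p))\<^sup>2 / 2))"
      using lam by (simp add: field_simps power2_eq_square)
    thus ?thesis using s by simp
  qed
  hence "lam * (P - V) \<le> inner (p - c) (v - p)"
    by (rule le_if_le_add_small_multiples)
  thus "inner (c - p) (v - p) \<le> lam * (real_of_ereal (h v) - real_of_ereal (h p))"
    using P V by (simp add: inner_diff_left algebra_simps)
qed

lemma prox_variational_inequality:
  fixes h :: "'a::euclidean_space \<Rightarrow> ereal"
  assumes "proper_fn h" "closed_fn h" "convex_fn h" "lam > 0"
    and "\<And>u. ereal (inner a u + b) \<le> h u"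
  shows "prox lam h c \<in> edom h"
    and "v \<in> edom h \<Longrightarrow> inner (c - prox lam h c) (v - prox lam h c)
                          \<le> lam * (real_of_ereal (h v) - real_of_ereal (h (prox lam h c)))"
  using prox_minimizer_vi[OF assms(1,3,4) someI_ex[OF prox_minimizer_exists[OF assms(1,2,4,5)], rule_format]]
  unfolding prox_def by blast+

lemma prox_path_distance_le:
  fixes c b p1 p2 :: "'a::real_inner"
  assumes l1: "0 < l1" and l12: "l1 \<le> l2"
    and vi1: "inner ((c + l1 *\<^sub>R b) - p1) (p2 - p1) \<le> l1 * (H2 - H1)"
    and vi2: "inner ((c + l2 *\<^sub>R b) - p2) (p1 - p2) \<le> l2 * (H1 - H2)"
  shows "l1 * norm (p2 - c) \<le> l2 * norm (p1 - c)"
proof -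
  define u1 where "u1 = c - p1"
  define u2 where "u2 = c - p2"
  have "l2 * inner u1 (u1 - u2) + l1 * l2 * inner b (u1 - u2) \<le> l1 * l2 * (H2 - H1)"
    using mult_left_mono[OF vi1, of l2] l1 l12
    unfolding u1_def u2_def by (simp add: inner_add_left inner_diff_right algebra_simps)
  moreover have "l1 * inner u2 (u2 - u1) + l1 * l2 * inner b (u2 - u1) \<le> l1 * l2 * (H1 - H2)"
    using mult_left_mono[OF vi2, of l1] l1
    unfolding u1_def u2_def by (simp add: inner_add_left inner_diff_right algebra_simps)
  ultimately have "l2 * (norm u1)\<^sup>2 + l1 * (norm u2)\<^sup>2 \<le> (l1 + l2) * inner u1 u2"
    by (simp add: inner_diff_right power2_norm_eq_inner inner_commute algebra_simps)
  also have "\<dots> \<le> (l1 + l2) * (norm u1 * norm u2)"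
    using l1 l12 by (intro mult_left_mono norm_cauchy_schwarz) auto
  finally have key: "l2 * (norm u1)\<^sup>2 + l1 * (norm u2)\<^sup>2 \<le> (l1 + l2) * (norm u1 * norm u2)" .
  have "l1 * norm u2 \<le> l2 * norm u1"
  proof (rule ccontr)
    assume contra: "\<not> l1 * norm u2 \<le> l2 * norm u1"
    moreover have "l1 * norm u1 \<le> l2 * norm u1" using l12 by (simp add: mult_right_mono)
    ultimately have "norm u1 < norm u2" using l1 by (smt (verit) mult_less_cancel_left_pos)
    hence "0 < (l1 * norm u2 - l2 * norm u1) * (norm u2 - norm u1)"
      using contra by (intro mult_pos_pos) auto
    thus False using key by (simp add: algebra_simps power2_eq_square)
  qed
  thus ?thesis unfolding u1_def u2_def by (simp add: norm_minus_commute)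
qed

section \<open>One-step estimates\<close>

(* Completing the square in u + w; this is where the condition omega > 0 of PDAc-L comes from. *)
lemma extrapolation_quadratic_bound:
  fixes u w :: "'a::real_inner"
  assumes psi: "psi > 1" and d: "0 < d" "d \<le> phi"
  shows "- ((1 + psi) / psi) * (norm (u + w))\<^sup>2 + 2 * psi * d * inner w u + xi * d * (norm u)\<^sup>2
         \<le> - d * (2 * psi - xi - psi ^ 3 * phi / (1 + psi)) * (norm u)\<^sup>2"
proof -
  define c where "c = (1 + psi) / psi"
  have c0: "c > 0" unfolding c_def using psi by auto
  define v where "v = u + w"
  have "(norm (v - (psi * d / c) *\<^sub>R u))\<^sup>2
      = (norm v)\<^sup>2 - 2 * (psi * d / c) * inner v u + (psi * d / c)\<^sup>2 * (norm u)\<^sup>2"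
    unfolding power2_norm_eq_inner
    by (simp add: inner_diff_left inner_diff_right inner_commute power2_eq_square algebra_simps)
  moreover have "0 \<le> c * (norm (v - (psi * d / c) *\<^sub>R u))\<^sup>2" using c0 by simp
  ultimately have "0 \<le> c * ((norm v)\<^sup>2 - 2 * (psi * d / c) * inner v u + (psi * d / c)\<^sup>2 * (norm u)\<^sup>2)"
    by simp
  also have "\<dots> = c * (norm v)\<^sup>2 - 2 * psi * d * inner v u + (psi * d)\<^sup>2 / c * (norm u)\<^sup>2"
    using c0 by (simp add: field_simps power2_eq_square)
  finally have key: "- c * (norm v)\<^sup>2 + 2 * psi * d * inner v u \<le> (psi * d)\<^sup>2 / c * (norm u)\<^sup>2"
    by simp
  have "(psi * d)\<^sup>2 / c = d * (psi ^ 3 * d / (1 + psi))" unfolding c_def using psi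
    by (simp add: field_simps power2_eq_square power3_eq_cube)
  also have "\<dots> \<le> d * (psi ^ 3 * phi / (1 + psi))"
    using d psi by (intro mult_left_mono divide_right_mono) auto
  finally have "(psi * d)\<^sup>2 / c * (norm u)\<^sup>2 \<le> d * (psi ^ 3 * phi / (1 + psi)) * (norm u)\<^sup>2"
    by (rule mult_right_mono) simp
  moreover have "inner w u = inner v u - (norm u)\<^sup>2" unfolding v_def
    by (simp add: inner_add_left power2_norm_eq_inner)
  ultimately show ?thesis using key unfolding c_def v_def by (simp add: algebra_simps)
qed

lemma extrapolation_three_point:
  fixes x0 x1 zc z1 z2 xs :: "'a::real_inner"
  assumes psi: "psi > 1" and d: "0 < d" "d \<le> phi"
    and z1: "z1 = ((psi - 1) / psi) *\<^sub>R x0 + (1 / psi) *\<^sub>R zc"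
    and z2: "z2 = ((psi - 1) / psi) *\<^sub>R x1 + (1 / psi) *\<^sub>R z1"
  shows "2 * inner (x1 - z1) (xs - x1) + 2 * d * inner (x0 - zc) (x1 - x0) + xi * d * (norm (x1 - x0))\<^sup>2
    \<le> (psi / (psi - 1)) * ((norm (z1 - xs))\<^sup>2 - (norm (z2 - xs))\<^sup>2)
       - d * (2 * psi - xi - psi ^ 3 * phi / (1 + psi)) * (norm (x1 - x0))\<^sup>2"
proof -
  have three_point: "2 * inner (x1 - z1) (xs - x1)
      = (norm (z1 - xs))\<^sup>2 - (norm (x1 - z1))\<^sup>2 - (norm (x1 - xs))\<^sup>2"
    using power2_norm_add[of "x1 - z1" "xs - x1"] by (simp add: norm_minus_commute)
  have "z2 - xs = (1 - 1 / psi) *\<^sub>R (x1 - xs) + (1 / psi) *\<^sub>R (z1 - xs)"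
    unfolding z2 using psi by (simp add: algebra_simps diff_divide_distrib)
  hence "(norm (z2 - xs))\<^sup>2 = (1 - 1 / psi) * (norm (x1 - xs))\<^sup>2 + (1 / psi) * (norm (z1 - xs))\<^sup>2
           - (1 / psi) * (1 - 1 / psi) * (norm (x1 - z1))\<^sup>2"
    using power2_norm_convex_combination[of "1 / psi" "x1 - xs" "z1 - xs"] by simp
  hence energy: "(psi / (psi - 1)) * ((norm (z1 - xs))\<^sup>2 - (norm (z2 - xs))\<^sup>2)
       = (norm (z1 - xs))\<^sup>2 - (norm (x1 - xs))\<^sup>2 + (1 / psi) * (norm (x1 - z1))\<^sup>2"
  proof -
    assume z2_norm: "(norm (z2 - xs))\<^sup>2 = (1 - 1 / psi) * (norm (x1 - xs))\<^sup>2
      + (1 / psi) * (norm (z1 - xs))\<^sup>2 - (1 / psi) * (1 - 1 / psi) * (norm (x1 - z1))\<^sup>2"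
    show ?thesis unfolding z2_norm using psi by (simp add: field_simps)
  qed
  have "psi *\<^sub>R z1 = (psi - 1) *\<^sub>R x0 + zc"
    unfolding z1 using psi by (simp add: scaleR_add_right)
  hence "x0 - zc = psi *\<^sub>R (x0 - z1)" by (simp add: algebra_simps)
  moreover define u w where "u = x1 - x0" and "w = x0 - z1"
  ultimately have "2 * d * inner (x0 - zc) (x1 - x0) = 2 * psi * d * inner w u" by simp
  moreover have "x1 - z1 = u + w" unfolding u_def w_def by simp
  ultimately have "2 * inner (x1 - z1) (xs - x1) + 2 * d * inner (x0 - zc) (x1 - x0)
      + xi * d * (norm (x1 - x0))\<^sup>2
     = (psi / (psi - 1)) * ((norm (z1 - xs))\<^sup>2 - (norm (z2 - xs))\<^sup>2)
       + (- ((1 + psi) / psi) * (norm (u + w))\<^sup>2 + 2 * psi * d * inner w u + xi * d * (norm u)\<^sup>2)"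
    unfolding three_point energy u_def[symmetric] using psi by (simp add: field_simps)
  thus ?thesis using extrapolation_quadratic_bound[OF psi d, of u w xi] unfolding u_def by simp
qed

lemma primal_step_estimate:
  fixes x0 x1 zc z1 z2 xs a0 a1 :: "'a::real_inner"
  assumes psi: "1 < psi" and xi: "0 < xi" and T: "0 < T" and T0: "0 < T0" and ratio: "T / T0 \<le> phi"
    and z1: "z1 = ((psi - 1) / psi) *\<^sub>R x0 + (1 / psi) *\<^sub>R zc"
    and z2: "z2 = ((psi - 1) / psi) *\<^sub>R x1 + (1 / psi) *\<^sub>R z1"
    and vi1: "inner (z1 - T *\<^sub>R a1 - x1) (xs - x1) \<le> T * (Gxs - Gx1)"
    and vi0: "inner (zc - T0 *\<^sub>R a0 - x0) (x1 - x0) \<le> T0 * (Gx1 - Gx0)"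
    and cvx: "P0 + inner a1 (xs - x0) \<le> Ps"
  shows "2 * T * (Gx0 + P0 - Gxs - Ps)
    \<le> (psi / (psi - 1)) * ((norm (z1 - xs))\<^sup>2 - (norm (z2 - xs))\<^sup>2)
       - (T / T0) * (2 * psi - xi - psi ^ 3 * phi / (1 + psi)) * (norm (x1 - x0))\<^sup>2
       + (T * T0 / xi) * (norm (a1 - a0))\<^sup>2"
proof -
  define d where "d = T / T0"
  have d0: "0 < d" and dT0: "d * T0 = T" unfolding d_def using T T0 by auto
  have "T * Gx1 - T * Gxs \<le> inner (x1 - z1) (xs - x1) + T * inner a1 (xs - x1)"
    using vi1 by (simp add: inner_diff_left algebra_simps)
  moreover have "d * inner (zc - T0 *\<^sub>R a0 - x0) (x1 - x0) \<le> d * (T0 * (Gx1 - Gx0))"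
    using vi0 d0 by (intro mult_left_mono) auto
  hence "T * Gx0 - T * Gx1 \<le> d * inner (x0 - zc) (x1 - x0) + T * inner a0 (x1 - x0)"
    unfolding dT0[symmetric] by (simp add: inner_diff_left algebra_simps)
  moreover have "inner a1 (xs - x1) + inner a0 (x1 - x0)
      = inner a1 (xs - x0) - inner (a1 - a0) (x1 - x0)"
    by (simp add: inner_diff_left inner_diff_right algebra_simps)
  moreover have "T * inner a1 (xs - x0) \<le> T * (Ps - P0)"
    using cvx T by (intro mult_left_mono) auto
  moreover have "T * (- inner (a1 - a0) (x1 - x0))
      \<le> T * ((T0 / xi) / 2 * (norm (a1 - a0))\<^sup>2 + (1 / (2 * (T0 / xi))) * (norm (x1 - x0))\<^sup>2)"
    using neg_inner_le_Young[of "T0 / xi"] T T0 xi by (intro mult_left_mono) auto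
  hence "T * (- inner (a1 - a0) (x1 - x0))
      \<le> (T * T0 / xi) / 2 * (norm (a1 - a0))\<^sup>2 + (xi * d / 2) * (norm (x1 - x0))\<^sup>2"
    unfolding d_def by (simp add: algebra_simps)
  moreover have "2 * inner (x1 - z1) (xs - x1) + 2 * d * inner (x0 - zc) (x1 - x0)
      + xi * d * (norm (x1 - x0))\<^sup>2
    \<le> (psi / (psi - 1)) * ((norm (z1 - xs))\<^sup>2 - (norm (z2 - xs))\<^sup>2)
       - d * (2 * psi - xi - psi ^ 3 * phi / (1 + psi)) * (norm (x1 - x0))\<^sup>2"
    using extrapolation_three_point[OF psi d0 ratio[folded d_def] z1 z2] .
  ultimately show ?thesis unfolding d_def[symmetric] by (simp add: algebra_simps)
qed

lemma dual_step_estimate: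
  fixes y0 y1 ys b :: "'b::real_inner"
  assumes beta: "0 < beta" and T: "0 < T"
    and vi: "inner (y0 + (beta * T) *\<^sub>R b - y1) (ys - y1) \<le> beta * T * (Fys - Fy1)"
    and ccv: "Qs \<le> Q0 + inner b (ys - y0)"
  shows "2 * T * (Fy1 - Fys + Qs - Q1)
    \<le> 2 * T * (Q0 + inner b (y1 - y0) - Q1)
       + (1 / beta) * ((norm (y0 - ys))\<^sup>2 - (norm (y1 - ys))\<^sup>2 - (norm (y1 - y0))\<^sup>2)"
proof -
  have three_point: "2 * inner (y1 - y0) (ys - y1)
      = (norm (y0 - ys))\<^sup>2 - (norm (y1 - y0))\<^sup>2 - (norm (y1 - ys))\<^sup>2"
    using power2_norm_add[of "y1 - y0" "ys - y1"] by (simp add: norm_minus_commute)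
  have "beta * T * (Fy1 - Fys) \<le> inner (y1 - y0) (ys - y1) + beta * T * (- inner b (ys - y1))"
    using vi by (simp add: inner_diff_left inner_add_left algebra_simps)
  also have "beta * T * (- inner b (ys - y1)) \<le> beta * T * (Q0 - Qs + inner b (y1 - y0))"
    using ccv beta T by (intro mult_left_mono) (auto simp: inner_diff_right)
  finally have "beta * (2 * T * (Fy1 - Fys + Qs - Q1))
      \<le> beta * (2 * T * (Q0 + inner b (y1 - y0) - Q1) + (1 / beta) * (2 * inner (y1 - y0) (ys - y1)))"
    using beta by (simp add: algebra_simps)
  hence "2 * T * (Fy1 - Fys + Qs - Q1)
      \<le> 2 * T * (Q0 + inner b (y1 - y0) - Q1) + (1 / beta) * (2 * inner (y1 - y0) (ys - y1))"
    using beta by simp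
  thus ?thesis unfolding three_point by (simp add: algebra_simps)
qed

section \<open>The saddle gap and the linesearch quantities\<close>

definition saddle_gap :: "('a \<Rightarrow> ereal) \<Rightarrow> ('b \<Rightarrow> ereal) \<Rightarrow> ('a \<Rightarrow> 'b \<Rightarrow> real) \<Rightarrow> 'a \<Rightarrow> 'b
    \<Rightarrow> 'a \<Rightarrow> 'b \<Rightarrow> real" where
  "saddle_gap g F Phi xs ys u v =
     (real_of_ereal (g u) + Phi u ys - real_of_ereal (F ys))
     - (real_of_ereal (g xs) + Phi xs v - real_of_ereal (F v))"

lemma Lag_diff_eq_saddle_gap:
  assumes "proper_fn g" "proper_fn F" "u \<in> edom g" "xs \<in> edom g" "v \<in> edom F" "ys \<in> edom F"
  shows "Lag g F Phi u ys - Lag g F Phi xs v = ereal (saddle_gap g F Phi xs ys u v)"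
proof -
  obtain a b c d where "g u = ereal a" "g xs = ereal b" "F v = ereal c" "F ys = ereal d"
    using proper_fn_finite_on_edom assms by metis
  thus ?thesis by (simp add: Lag_def saddle_gap_def)
qed

lemma saddle_gap_nonneg:
  fixes g :: "'a::real_inner \<Rightarrow> ereal" and F :: "'b::real_inner \<Rightarrow> ereal"
  assumes saddle: "(xs, ys) \<in> saddle_set g F Phix Phiy"
    and pr: "proper_fn g" "proper_fn F" and u: "u \<in> edom g" and v: "v \<in> edom F"
    and cvx: "convex_on (edom g) (\<lambda>u. Phi u ys)" and ccv: "concave_on (edom F) (\<lambda>v. Phi xs v)"
    and dx: "((\<lambda>u. Phi u ys) has_derivative (\<lambda>h. inner (Phix xs ys) h)) (at xs)"
    and dy: "((\<lambda>v. Phi xs v) has_derivative (\<lambda>h. inner (Phiy xs ys) h)) (at ys)"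
  shows "0 \<le> saddle_gap g F Phi xs ys u v"
proof -
  have xs: "xs \<in> edom g" and ys: "ys \<in> edom F"
    and sub: "- Phix xs ys \<in> subdiff g xs" "Phiy xs ys \<in> subdiff F ys"
    using saddle unfolding saddle_set_def by auto
  obtain Gxs Gu Fys Fv where
    fin: "g xs = ereal Gxs" "g u = ereal Gu" "F ys = ereal Fys" "F v = ereal Fv"
    using proper_fn_finite_on_edom pr xs u ys v by metis
  have "g xs + ereal (inner (- Phix xs ys) (u - xs)) \<le> g u"
    and "F ys + ereal (inner (Phiy xs ys) (v - ys)) \<le> F v"
    using sub unfolding subdiff_def by blast+
  hence "Gxs - inner (Phix xs ys) (u - xs) \<le> Gu" and "Fys + inner (Phiy xs ys) (v - ys) \<le> Fv"
    unfolding fin by simp_all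
  moreover have "Phi xs ys + inner (Phix xs ys) (u - xs) \<le> Phi u ys"
    by (rule convex_on_gradient_inequality[OF cvx xs u dx])
  moreover have "Phi xs v \<le> Phi xs ys + inner (Phiy xs ys) (v - ys)"
    by (rule concave_on_gradient_inequality[OF ccv ys v dy])
  ultimately show ?thesis unfolding saddle_gap_def fin by simp
qed

lemma saddle_gap_average:
  fixes g :: "'a::real_vector \<Rightarrow> ereal" and F :: "'b::real_vector \<Rightarrow> ereal"
  assumes g: "proper_fn g" "convex_fn g" and F: "proper_fn F" "convex_fn F"
    and cvx: "convex_on (edom g) (\<lambda>u. Phi u ys)" and ccv: "concave_on (edom F) (\<lambda>v. Phi xs v)"
    and xs: "xs \<in> edom g" and ys: "ys \<in> edom F"
    and S: "finite S" "S \<noteq> {}" and w1: "(\<Sum>i\<in>S. w i) = 1" and w0: "\<And>i. i \<in> S \<Longrightarrow> 0 \<le> w i"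
    and x: "\<And>i. i \<in> S \<Longrightarrow> x i \<in> edom g" and y: "\<And>i. i \<in> S \<Longrightarrow> y i \<in> edom F"
  shows "Lag g F Phi (\<Sum>i\<in>S. w i *\<^sub>R x i) ys - Lag g F Phi xs (\<Sum>i\<in>S. w i *\<^sub>R y i)
           \<le> ereal (\<Sum>i\<in>S. w i * saddle_gap g F Phi xs ys (x i) (y i))"
proof -
  let ?xh = "\<Sum>i\<in>S. w i *\<^sub>R x i" and ?yh = "\<Sum>i\<in>S. w i *\<^sub>R y i"
  have gJ: "g ?xh \<le> ereal (\<Sum>i\<in>S. w i * real_of_ereal (g (x i)))"
    and FJ: "F ?yh \<le> ereal (\<Sum>i\<in>S. w i * real_of_ereal (F (y i)))"
    using convex_fn_jensen g F S w1 w0 x y by blast+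
  hence xh: "?xh \<in> edom g" and yh: "?yh \<in> edom F"
    unfolding edom_def by (auto intro: le_less_trans)
  have "Phi ?xh ys \<le> (\<Sum>i\<in>S. w i * Phi (x i) ys)"
    using convex_on_sum[OF S cvx] w1 w0 x by auto
  moreover have "(\<Sum>i\<in>S. w i * Phi xs (y i)) \<le> Phi xs ?yh"
    using concave_on_sum[OF S ccv] w1 w0 y by auto
  moreover obtain Gh Fh where "g ?xh = ereal Gh" "F ?yh = ereal Fh"
    using proper_fn_finite_on_edom g(1) F(1) xh yh by metis
  hence "real_of_ereal (g ?xh) \<le> (\<Sum>i\<in>S. w i * real_of_ereal (g (x i)))"
    and "real_of_ereal (F ?yh) \<le> (\<Sum>i\<in>S. w i * real_of_ereal (F (y i)))"
    using gJ FJ by simp_all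
  moreover have "(\<Sum>i\<in>S. w i * saddle_gap g F Phi xs ys (x i) (y i))
      = (\<Sum>i\<in>S. w i * real_of_ereal (g (x i))) + (\<Sum>i\<in>S. w i * Phi (x i) ys)
        - real_of_ereal (F ys) - real_of_ereal (g xs) - (\<Sum>i\<in>S. w i * Phi xs (y i))
        + (\<Sum>i\<in>S. w i * real_of_ereal (F (y i)))"
  proof -
    have const: "(\<Sum>i\<in>S. w i * c) = c" for c
      using w1 by (simp flip: sum_distrib_right)
    have "(\<Sum>i\<in>S. w i * saddle_gap g F Phi xs ys (x i) (y i))
        = (\<Sum>i\<in>S. w i * real_of_ereal (g (x i)) + w i * Phi (x i) ys - w i * real_of_ereal (F ys)
            - w i * real_of_ereal (g xs) - w i * Phi xs (y i) + w i * real_of_ereal (F (y i)))"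
      unfolding saddle_gap_def by (simp add: algebra_simps)
    thus ?thesis by (simp only: sum.distrib sum_subtractf const)
  qed
  ultimately show ?thesis
    unfolding Lag_diff_eq_saddle_gap[OF g(1) F(1) xh xs yh ys] saddle_gap_def by simp
qed

lemma window_average_le:
  fixes r :: "nat \<Rightarrow> real"
  assumes M: "1 \<le> M" and n: "2 \<le> n" and r: "\<And>k. 1 \<le> k \<Longrightarrow> 0 \<le> r k"
  shows "(\<Sum>k\<in>{max (n - M) 1 .. n - 1}. r k) / card {max (n - M) 1 .. n - 1}
           \<le> (if n \<le> M then (\<Sum>k = 1..M. r k) else (\<Sum>j = 1..M. r (n - j)) / M)"
proof (cases "n \<le> M")
  case True
  hence W: "{max (n - M) 1 .. n - 1} = {1 .. n - 1}" by auto
  have "0 \<le> (\<Sum>k = 1..n - 1. r k)" using r by (intro sum_nonneg) auto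
  moreover have "1 \<le> real (card {1 .. n - 1})" using n by simp
  ultimately have "(\<Sum>k = 1..n - 1. r k) / card {1 .. n - 1} \<le> (\<Sum>k = 1..n - 1. r k)"
    by (simp add: divide_le_eq mult_le_cancel_left1 mult_le_cancel_right1 mult.commute
        mult_left_le)
  also have "\<dots> \<le> (\<Sum>k = 1..M. r k)" using True r by (intro sum_mono2) auto
  finally show ?thesis using True unfolding W by simp
next
  case False
  have "{max (n - M) 1 .. n - 1} = (\<lambda>j. n - j) ` {1..M}"
  proof (intro set_eqI iffI)
    fix k assume "k \<in> {max (n - M) 1 .. n - 1}"
    thus "k \<in> (\<lambda>j. n - j) ` {1..M}" using False by (intro image_eqI[of _ _ "n - k"]) auto
  qed (use False in auto)
  moreover have "inj_on (\<lambda>j. n - j) {1..M}" using False by (auto simp: inj_on_def)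
  ultimately show ?thesis using False M by (simp add: sum.reindex card_image)
qed

(* Each r_k enters at most M of the windows {n - M .. n - 1}. *)
lemma sum_window_averages_le:
  fixes r :: "nat \<Rightarrow> real"
  assumes M: "1 \<le> M" and r: "\<And>k. 1 \<le> k \<Longrightarrow> 0 \<le> r k"
  shows "(\<Sum>n = 2..N. (\<Sum>k\<in>{max (n - M) 1 .. n - 1}. r k) / card {max (n - M) 1 .. n - 1})
           \<le> (\<Sum>k = 1..N. r k) + M * (\<Sum>k = 1..M. r k)"
proof -
  have shifted: "(\<Sum>n\<in>{M<..N}. r (n - j)) \<le> (\<Sum>k = 1..N. r k)" if j: "j \<in> {1..M}" for j
  proof -
    have "inj_on (\<lambda>n. n - j) {M<..N}" using j by (auto simp: inj_on_def)
    hence "(\<Sum>n\<in>{M<..N}. r (n - j)) = (\<Sum>k\<in>(\<lambda>n. n - j) ` {M<..N}. r k)"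
      by (simp add: sum.reindex)
    also have "\<dots> \<le> (\<Sum>k = 1..N. r k)" using j r by (intro sum_mono2) auto
    finally show ?thesis .
  qed
  have "(\<Sum>n = 2..N. (\<Sum>k\<in>{max (n - M) 1 .. n - 1}. r k) / card {max (n - M) 1 .. n - 1})
      \<le> (\<Sum>n = 2..N. if n \<le> M then (\<Sum>k = 1..M. r k) else (\<Sum>j = 1..M. r (n - j)) / M)"
    using window_average_le[where r = r, OF M _ r] by (intro sum_mono) auto
  also have "\<dots> = (\<Sum>n\<in>{2..N} \<inter> {..M}. (\<Sum>k = 1..M. r k))
      + (\<Sum>j = 1..M. \<Sum>n\<in>{M<..N}. r (n - j)) / M"
  proof -
    have "{2..N} \<inter> - {..M} = {M<..N}" using M by auto
    thus ?thesis by (simp add: sum.If_cases sum_divide_distrib flip: atMost_def) (rule sum.swap)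
  qed
  also have "\<dots> \<le> M * (\<Sum>k = 1..M. r k) + (\<Sum>j = 1..M. \<Sum>k = 1..N. r k) / M"
  proof (intro add_mono divide_right_mono sum_mono shifted)
    have "card ({2..N} \<inter> {..M}) \<le> M" using card_mono[of "{1..M}" "{2..N} \<inter> {..M}"] by auto
    moreover have "0 \<le> (\<Sum>k = 1..M. r k)" using r by (intro sum_nonneg) auto
    ultimately show "(\<Sum>n\<in>{2..N} \<inter> {..M}. \<Sum>k = 1..M. r k) \<le> M * (\<Sum>k = 1..M. r k)"
      by (simp add: mult_right_mono)
  qed auto
  finally show ?thesis using M by simp
qed

(* The linesearch test with a = |x_n - x_(n-1)|, b = |v - y_(n-1)| and the Lipschitz bounds th
   and py for its two terms. *)
lemma small_step_test_holds:
  fixes t T0 Tm xi nu om beta Lxx Lxy Lyy a b th py dl c :: real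
  assumes pos: "0 < t" "0 < T0" "T0 \<le> Tm" "0 < xi" "0 < beta" "0 \<le> om" "0 < Lxy" "0 \<le> Lyy"
    and nu: "0 < nu" "nu \<le> 1" and c: "0 \<le> c"
    and th: "th \<le> 2 * Lxx\<^sup>2 * a\<^sup>2 + 2 * Lxy\<^sup>2 * b\<^sup>2" and py: "py \<le> Lyy * b\<^sup>2" and dl: "T0 / Tm \<le> dl"
    and t1: "t \<le> nu * om * xi / (2 * (Lxx\<^sup>2 + 1) * Tm)"
    and t2: "t \<le> nu / (beta * (2 * Tm * Lxy\<^sup>2 / xi + 2 * Lyy))"
  shows "t * T0 / xi * th + 2 * t * py \<le> nu * (om * dl * a\<^sup>2 + (1 / beta) * b\<^sup>2) + (1 - nu) * c"
proof -
  have Tm: "0 < Tm" using pos by linarith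
  have "t * (2 * Lxx\<^sup>2 * Tm) \<le> t * (2 * (Lxx\<^sup>2 + 1) * Tm)"
    using pos Tm by (intro mult_left_mono) auto
  also have "\<dots> \<le> nu * om * xi"
  proof -
    have "0 < 2 * (Lxx\<^sup>2 + 1) * Tm" using Tm by (intro mult_pos_pos add_nonneg_pos) auto
    thus ?thesis using t1 by (simp only: pos_le_divide_eq)
  qed
  finally have "t * (2 * Lxx\<^sup>2 * Tm) * (T0 / (xi * Tm) * a\<^sup>2) \<le> nu * om * xi * (T0 / (xi * Tm) * a\<^sup>2)"
    using pos Tm by (intro mult_right_mono) auto
  also have "\<dots> = nu * om * (T0 / Tm) * a\<^sup>2" using pos by (simp add: field_simps)
  also have "\<dots> \<le> nu * om * dl * a\<^sup>2"
    using dl nu pos by (intro mult_right_mono mult_left_mono) auto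
  finally have primal: "t * T0 / xi * (2 * Lxx\<^sup>2 * a\<^sup>2) \<le> nu * om * dl * a\<^sup>2"
    using pos Tm by (simp add: field_simps)
  have W: "0 < beta * (2 * Tm * Lxy\<^sup>2 / xi + 2 * Lyy)"
    using pos Tm by (intro mult_pos_pos add_pos_nonneg) auto
  have "t * T0 / xi * (2 * Lxy\<^sup>2 * b\<^sup>2) \<le> t * Tm / xi * (2 * Lxy\<^sup>2 * b\<^sup>2)"
    using pos by (intro mult_right_mono divide_right_mono mult_left_mono) auto
  hence "t * T0 / xi * (2 * Lxy\<^sup>2 * b\<^sup>2) + 2 * t * (Lyy * b\<^sup>2)
      \<le> (t * (beta * (2 * Tm * Lxy\<^sup>2 / xi + 2 * Lyy))) * ((1 / beta) * b\<^sup>2)"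
    using pos by (simp add: field_simps)
  also have "\<dots> \<le> nu * ((1 / beta) * b\<^sup>2)"
    using t2 W pos by (intro mult_right_mono) (auto simp: pos_le_divide_eq)
  finally have dual: "t * T0 / xi * (2 * Lxy\<^sup>2 * b\<^sup>2) + 2 * t * (Lyy * b\<^sup>2) \<le> nu * ((1 / beta) * b\<^sup>2)" .
  have "t * T0 / xi * th \<le> t * T0 / xi * (2 * Lxx\<^sup>2 * a\<^sup>2 + 2 * Lxy\<^sup>2 * b\<^sup>2)"
    using th pos by (intro mult_left_mono) auto
  moreover have "2 * t * py \<le> 2 * t * (Lyy * b\<^sup>2)" using py pos by simp
  moreover have "0 \<le> (1 - nu) * c" using nu c by simp
  ultimately show ?thesis using primal dual by (simp add: algebra_simps)
qed

section \<open>Runs of PDAc-L\<close>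

(* F plays the role of f^*, of which only properness, closedness and convexity are used. *)
locale pdacl_run =
  fixes g :: "'a::euclidean_space \<Rightarrow> ereal" and F :: "'b::euclidean_space \<Rightarrow> ereal"
    and Phi :: "'a \<Rightarrow> 'b \<Rightarrow> real" and Phix :: "'a \<Rightarrow> 'b \<Rightarrow> 'a" and Phiy :: "'a \<Rightarrow> 'b \<Rightarrow> 'b"
    and psi xi phi taumax nu mu eta beta :: real and M :: nat
    and x :: "nat \<Rightarrow> 'a" and y :: "nat \<Rightarrow> 'b" and z :: "nat \<Rightarrow> 'a" and tau :: "nat \<Rightarrow> real"
    and xs :: 'a and ys :: 'b
  assumes g_pcc: "proper_fn g" "closed_fn g" "convex_fn g"
    and F_pcc: "proper_fn F" "closed_fn F" "convex_fn F"
    and Phi_cvx: "\<forall>v \<in> edom F. convex_on (edom g) (\<lambda>u. Phi u v)"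
    and Phi_ccv: "\<forall>u \<in> edom g. concave_on (edom F) (\<lambda>v. Phi u v)"
    and Phi_dx: "\<forall>u \<in> edom g. \<forall>v \<in> edom F.
                   ((\<lambda>w. Phi w v) has_derivative (\<lambda>h. inner (Phix u v) h)) (at u)"
    and Phi_dy: "\<forall>u \<in> edom g. \<forall>v \<in> edom F.
                   ((\<lambda>w. Phi u w) has_derivative (\<lambda>h. inner (Phiy u v) h)) (at v)"
    and Phi_lip: "\<forall>X Y. bounded X \<longrightarrow> bounded Y \<longrightarrow>
        (\<exists>Lyy Lxx Lxy. Lyy \<ge> 0 \<and> Lxx \<ge> 0 \<and> Lxy > 0 \<and>
          (\<forall>u \<in> X \<inter> edom g. \<forall>u' \<in> X \<inter> edom g. \<forall>v \<in> Y \<inter> edom F. \<forall>v' \<in> Y \<inter> edom F.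
             norm (Phiy u v - Phiy u v') \<le> Lyy * norm (v - v') \<and>
             norm (Phix u v - Phix u' v') \<le> Lxx * norm (u - u') + Lxy * norm (v - v')))"
    and psi: "1 < psi" and xi: "0 < xi" and phi: "1 < phi"
    and omega_pos: "0 < 2 * psi - xi - psi ^ 3 * phi / (1 + psi)"
    and taumax: "0 < taumax" and nu: "0 < nu" "nu < 1" and mu: "0 < mu" "mu < 1"
    and eta: "0 \<le> eta" "eta < 1" and M: "1 \<le> M" and beta: "0 < beta"
    and init: "x 0 \<in> edom g" "y 0 \<in> edom F" "0 < tau 0" "tau 0 \<le> taumax"
    and iter: "pdacl g F Phi Phix Phiy psi xi phi taumax nu mu eta M beta x y z tau"
    and saddle: "(xs, ys) \<in> saddle_set g F Phix Phiy"
begin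

(* The let-bound quantities of pdacl: resid n v is r_n for the trial dual point v, cavg n is c_n,
   accept n t is the linesearch test for tau_n = t, and tbar n is the first trial step. *)
definition omega where "omega = 2 * psi - xi - psi ^ 3 * phi / (1 + psi)"

definition delta where "delta k = (if k = 0 then 1 else tau k / tau (k - 1))"

definition trial where
  "trial n t = prox (beta * t) F (y (n - 1) + (beta * t) *\<^sub>R Phiy (x n) (y (n - 1)))"

definition resid where
  "resid n v = omega * delta (n - 1) * (norm (x n - x (n - 1)))\<^sup>2 + (1 / beta) * (norm (v - y (n - 1)))\<^sup>2"

definition window where "window n = {max (n - M) 1 .. n - 1}"

definition cavg where
  "cavg n = (if n = 1 then 0 else eta / real (card (window n)) * (\<Sum>k\<in>window n. resid k (y k)))"

definition accept where
  "accept n t \<longleftrightarrow>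
     t * tau (n - 1) / xi * (norm (Phix (x n) (trial n t) - Phix (x (n - 1)) (y (n - 1))))\<^sup>2
     + 2 * t * (Phi (x n) (y (n - 1)) + inner (Phiy (x n) (y (n - 1))) (trial n t - y (n - 1))
                - Phi (x n) (trial n t))
     \<le> nu * resid n (trial n t) + (1 - nu) * cavg n"

definition tbar where "tbar n = min (phi * tau (n - 1)) taumax"

lemma pdacl_unfolded:
  "z 0 = x 0 \<and>
   (\<forall>n\<ge>1.
      z n = ((psi - 1) / psi) *\<^sub>R x (n - 1) + (1 / psi) *\<^sub>R z (n - 1) \<and>
      x n = prox (tau (n - 1)) g (z n - tau (n - 1) *\<^sub>R Phix (x (n - 1)) (y (n - 1))) \<and>
      (\<exists>i::nat. tau n = tbar n * mu ^ i \<and> accept n (tau n) \<and>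
                (\<forall>j<i. \<not> accept n (tbar n * mu ^ j))) \<and>
      y n = trial n (tau n))"
  using iter unfolding pdacl_def Let_def omega_def delta_def trial_def resid_def window_def
    cavg_def accept_def tbar_def .

lemma z_step: "1 \<le> n \<Longrightarrow> z n = ((psi - 1) / psi) *\<^sub>R x (n - 1) + (1 / psi) *\<^sub>R z (n - 1)"
  and x_step: "1 \<le> n \<Longrightarrow> x n = prox (tau (n - 1)) g (z n - tau (n - 1) *\<^sub>R Phix (x (n - 1)) (y (n - 1)))"
  and linesearch: "1 \<le> n \<Longrightarrow> \<exists>i::nat. tau n = tbar n * mu ^ i \<and> accept n (tau n) \<and>
                                  (\<forall>j<i. \<not> accept n (tbar n * mu ^ j))"
  and y_step: "1 \<le> n \<Longrightarrow> y n = trial n (tau n)"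
  using pdacl_unfolded by auto

lemma saddle_point:
  "xs \<in> edom g" "ys \<in> edom F" "- Phix xs ys \<in> subdiff g xs" "Phiy xs ys \<in> subdiff F ys"
  using saddle unfolding saddle_set_def by auto

lemma omega_gt_0: "0 < omega"
  using omega_pos unfolding omega_def .

(* The subgradients at the saddle point give the affine minorants the prox needs to exist. *)
lemma prox_g:
  assumes "0 < lam"
  shows "prox lam g c \<in> edom g"
    and "v \<in> edom g \<Longrightarrow> inner (c - prox lam g c) (v - prox lam g c)
                          \<le> lam * (real_of_ereal (g v) - real_of_ereal (g (prox lam g c)))"
proof -
  obtain a where "g xs = ereal a" using proper_fn_finite_on_edom g_pcc(1) saddle_point(1) by metis
  note minorant = subdiff_affine_minorant[OF saddle_point(3) this]
  show "prox lam g c \<in> edom g"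
    and "v \<in> edom g \<Longrightarrow> inner (c - prox lam g c) (v - prox lam g c)
                          \<le> lam * (real_of_ereal (g v) - real_of_ereal (g (prox lam g c)))"
    using prox_variational_inequality[OF g_pcc assms minorant] by blast+
qed

lemma trial_vi:
  assumes "0 < t"
  shows "trial n t \<in> edom F"
    and "v \<in> edom F \<Longrightarrow>
           inner (y (n - 1) + (beta * t) *\<^sub>R Phiy (x n) (y (n - 1)) - trial n t) (v - trial n t)
           \<le> beta * t * (real_of_ereal (F v) - real_of_ereal (F (trial n t)))"
proof -
  obtain a where "F ys = ereal a" using proper_fn_finite_on_edom F_pcc(1) saddle_point(2) by metis
  note minorant = subdiff_affine_minorant[OF saddle_point(4) this]
  have "0 < beta * t" using beta assms by simp
  from prox_variational_inequality[OF F_pcc this minorant]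
  show "trial n t \<in> edom F"
    and "v \<in> edom F \<Longrightarrow>
           inner (y (n - 1) + (beta * t) *\<^sub>R Phiy (x n) (y (n - 1)) - trial n t) (v - trial n t)
           \<le> beta * t * (real_of_ereal (F v) - real_of_ereal (F (trial n t)))"
    unfolding trial_def by blast+
qed

lemma tau_step_bounds:
  assumes "1 \<le> n" "0 < tau (n - 1)"
  shows "0 < tau n" "tau n \<le> taumax" "tau n \<le> phi * tau (n - 1)"
proof -
  obtain i where i: "tau n = tbar n * mu ^ i" using linesearch[OF assms(1)] by blast
  have "0 < mu ^ i" "mu ^ i \<le> 1" using mu by (auto simp: power_le_one)
  moreover have "0 < tbar n" "tbar n \<le> taumax" "tbar n \<le> phi * tau (n - 1)"
    unfolding tbar_def using assms(2) phi taumax by auto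
  ultimately show "0 < tau n" "tau n \<le> taumax" "tau n \<le> phi * tau (n - 1)"
    unfolding i by (simp_all add: mult_left_le order_trans[OF mult_left_le])
qed

lemma tau_pos: "0 < tau n" and tau_le_taumax: "tau n \<le> taumax"
proof -
  have "0 < tau n \<and> tau n \<le> taumax"
    by (induction n) (use init tau_step_bounds[of "Suc _"] in auto)
  thus "0 < tau n" "tau n \<le> taumax" by auto
qed

lemma tau_ratio_le: "1 \<le> n \<Longrightarrow> tau n \<le> phi * tau (n - 1)"
  using tau_step_bounds(3) tau_pos by blast

lemma x_in_edom: "x n \<in> edom g"
  using init(1) x_step[of n] prox_g(1)[OF tau_pos] by (cases n) auto

lemma x_vi:
  "1 \<le> n \<Longrightarrow> v \<in> edom g \<Longrightarrow>
     inner (z n - tau (n - 1) *\<^sub>R Phix (x (n - 1)) (y (n - 1)) - x n) (v - x n)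
     \<le> tau (n - 1) * (real_of_ereal (g v) - real_of_ereal (g (x n)))"
  using x_step prox_g(2)[OF tau_pos] by metis

lemma y_in_edom: "y n \<in> edom F"
  using init(2) y_step[of n] trial_vi(1)[OF tau_pos] by (cases n) auto

lemma y_vi:
  "1 \<le> n \<Longrightarrow> v \<in> edom F \<Longrightarrow>
     inner (y (n - 1) + (beta * tau n) *\<^sub>R Phiy (x n) (y (n - 1)) - y n) (v - y n)
     \<le> beta * tau n * (real_of_ereal (F v) - real_of_ereal (F (y n)))"
  using y_step trial_vi(2)[OF tau_pos] by metis

definition gap where "gap n = saddle_gap g F Phi xs ys (x n) (y n)"

definition energy where
  "energy n = psi / (psi - 1) * (norm (z (n + 1) - xs))\<^sup>2 + (1 / beta) * (norm (y (n - 1) - ys))\<^sup>2"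

definition gain where
  "gain n = omega * delta n * (norm (x (n + 1) - x n))\<^sup>2 + (1 / beta) * (norm (y n - y (n - 1)))\<^sup>2"

lemma gap_nonneg: "0 \<le> gap n"
  unfolding gap_def
  by (rule saddle_gap_nonneg[OF saddle g_pcc(1) F_pcc(1) x_in_edom y_in_edom
        Phi_cvx[rule_format, OF saddle_point(2)] Phi_ccv[rule_format, OF saddle_point(1)]
        Phi_dx[rule_format, OF saddle_point(1,2)] Phi_dy[rule_format, OF saddle_point(1,2)]])

(* The primal and dual estimates leave exactly the two terms bounded by the linesearch test. *)
lemma energy_step:
  assumes n: "1 \<le> n"
  shows "2 * tau n * gap n + energy (n + 1) + gain n
           \<le> energy n + nu * resid n (y n) + (1 - nu) * cavg n"
proof -
  have T: "0 < tau n" and T0: "0 < tau (n - 1)" using tau_pos by auto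
  have ratio: "tau n / tau (n - 1) \<le> phi" using tau_ratio_le[OF n] T0 by (simp add: divide_le_eq)
  have z1: "z (n + 1) = ((psi - 1) / psi) *\<^sub>R x n + (1 / psi) *\<^sub>R z n"
    and z2: "z (n + 2) = ((psi - 1) / psi) *\<^sub>R x (n + 1) + (1 / psi) *\<^sub>R z (n + 1)"
    using z_step[of "n + 1"] z_step[of "n + 2"] by simp_all
  have vi1: "inner (z (n + 1) - tau n *\<^sub>R Phix (x n) (y n) - x (n + 1)) (xs - x (n + 1))
      \<le> tau n * (real_of_ereal (g xs) - real_of_ereal (g (x (n + 1))))"
    using x_vi[of "n + 1"] saddle_point by simp
  have vi0: "inner (z n - tau (n - 1) *\<^sub>R Phix (x (n - 1)) (y (n - 1)) - x n) (x (n + 1) - x n)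
      \<le> tau (n - 1) * (real_of_ereal (g (x (n + 1))) - real_of_ereal (g (x n)))"
    using x_vi[OF n x_in_edom] .
  have cvx: "Phi (x n) (y n) + inner (Phix (x n) (y n)) (xs - x n) \<le> Phi xs (y n)"
    by (rule convex_on_gradient_inequality[OF Phi_cvx[rule_format, OF y_in_edom] x_in_edom
          saddle_point(1) Phi_dx[rule_format, OF x_in_edom y_in_edom]])
  note primal = primal_step_estimate[OF psi xi T T0 ratio z1 z2 vi1 vi0 cvx]
  have ccv: "Phi (x n) ys \<le> Phi (x n) (y (n - 1)) + inner (Phiy (x n) (y (n - 1))) (ys - y (n - 1))"
    by (rule concave_on_gradient_inequality[OF Phi_ccv[rule_format, OF x_in_edom] y_in_edom
          saddle_point(2) Phi_dy[rule_format, OF x_in_edom y_in_edom]])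
  note dual = dual_step_estimate[OF beta T y_vi[OF n saddle_point(2)] ccv]
  have "accept n (tau n)" using linesearch[OF n] by blast
  hence "tau n * tau (n - 1) / xi * (norm (Phix (x n) (y n) - Phix (x (n - 1)) (y (n - 1))))\<^sup>2
      + 2 * tau n * (Phi (x n) (y (n - 1)) + inner (Phiy (x n) (y (n - 1))) (y n - y (n - 1))
                     - Phi (x n) (y n))
      \<le> nu * resid n (y n) + (1 - nu) * cavg n"
    unfolding accept_def y_step[OF n, symmetric] .
  with primal dual n show ?thesis
    unfolding gap_def saddle_gap_def energy_def gain_def delta_def omega_def
    by (simp add: algebra_simps numeral_2_eq_2)
qed

lemma resid_nonneg: "1 \<le> k \<Longrightarrow> 0 \<le> resid k v"
  unfolding resid_def delta_def using omega_gt_0 beta tau_pos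
  by (intro add_nonneg_nonneg mult_nonneg_nonneg) (auto intro: less_imp_le)

lemma cavg_nonneg: "0 \<le> cavg n"
proof -
  have "0 \<le> (\<Sum>k\<in>window n. resid k (y k))"
    using resid_nonneg by (intro sum_nonneg) (auto simp: window_def)
  thus ?thesis unfolding cavg_def using eta by (auto intro!: mult_nonneg_nonneg)
qed

lemma sum_cavg_le:
  "(\<Sum>n = 1..N. cavg n)
     \<le> eta * (\<Sum>k = 1..N. resid k (y k)) + M * eta * (\<Sum>k = 1..M. resid k (y k))"
proof -
  have "(\<Sum>n = 1..N. cavg n) = (\<Sum>n = 2..N. cavg n)"
    by (cases N) (simp_all add: sum.atLeast_Suc_atMost cavg_def numeral_2_eq_2)
  also have "\<dots> = eta * (\<Sum>n = 2..N. (\<Sum>k\<in>{max (n - M) 1 .. n - 1}. resid k (y k))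
                                       / card {max (n - M) 1 .. n - 1})"
    unfolding sum_distrib_left by (intro sum.cong) (auto simp: cavg_def window_def)
  also have "\<dots> \<le> eta * ((\<Sum>k = 1..N. resid k (y k)) + M * (\<Sum>k = 1..M. resid k (y k)))"
    using sum_window_averages_le[OF M resid_nonneg] eta by (intro mult_left_mono)
  finally show ?thesis by (simp add: algebra_simps)
qed

(* r_(n+1) consists of the primal part of gain n and the dual part of gain (n + 1). *)
lemma sum_resid_le_sum_gain: "(\<Sum>n = 2..N. resid n (y n)) \<le> (\<Sum>n = 1..N. gain n)"
proof -
  have shifted: "(\<Sum>n = 2..Suc N. resid n (y n))
      + omega * delta (Suc N) * (norm (x (Suc N + 1) - x (Suc N)))\<^sup>2 \<le> (\<Sum>n = 1..Suc N. gain n)" for N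
  proof (induction N)
    case 0
    show ?case using beta by (simp add: gain_def)
  next
    case (Suc N)
    have "resid (Suc (Suc N)) (y (Suc (Suc N)))
        = omega * delta (Suc N) * (norm (x (Suc N + 1) - x (Suc N)))\<^sup>2
          + (1 / beta) * (norm (y (Suc (Suc N)) - y (Suc N)))\<^sup>2"
      by (simp add: resid_def)
    with Suc.IH show ?case by (simp add: gain_def)
  qed
  have primal_part_nonneg: "0 \<le> omega * delta n * (norm (x (n + 1) - x n))\<^sup>2" for n
    using omega_gt_0 tau_pos[of n] tau_pos[of "n - 1"] unfolding delta_def
    by (intro mult_nonneg_nonneg) auto
  show ?thesis
  proof (cases N)
    case (Suc N')
    show ?thesis using shifted[of N'] primal_part_nonneg[of "Suc N'"] unfolding Suc by linarith
  qed simp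
qed

lemma energy_telescope:
  "2 * (\<Sum>n = 1..N. tau n * gap n) + energy (N + 1) + (\<Sum>n = 1..N. gain n)
     \<le> energy 1 + nu * (\<Sum>n = 1..N. resid n (y n)) + (1 - nu) * (\<Sum>n = 1..N. cavg n)"
proof (induction N)
  case (Suc N)
  have "2 * tau (Suc N) * gap (Suc N) + energy (Suc N + 1) + gain (Suc N)
      \<le> energy (Suc N) + nu * resid (Suc N) (y (Suc N)) + (1 - nu) * cavg (Suc N)"
    using energy_step[of "Suc N"] by simp
  with Suc.IH show ?case by (simp add: algebra_simps)
qed simp

lemma energy_bounded:
  obtains K where "\<And>N. 2 * (\<Sum>n = 1..N. tau n * gap n) + energy (N + 1) \<le> K"
proof
  fix N
  define R where "R = (\<Sum>n = 1..N. resid n (y n))"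
  define Kc where "Kc = M * eta * (\<Sum>k = 1..M. resid k (y k))"
  have R_nonneg: "0 \<le> R" unfolding R_def using resid_nonneg by (intro sum_nonneg) auto
  have "R \<le> resid 1 (y 1) + (\<Sum>n = 2..N. resid n (y n))"
  proof (cases N)
    case 0
    thus ?thesis using resid_nonneg[of 1] unfolding R_def by simp
  next
    case (Suc N')
    hence "{1..N} = insert 1 {2..N}" by auto
    thus ?thesis unfolding R_def by simp
  qed
  hence "R - resid 1 (y 1) \<le> (\<Sum>n = 1..N. gain n)"
    using sum_resid_le_sum_gain[of N] by linarith
  moreover have "(1 - nu) * (\<Sum>n = 1..N. cavg n) \<le> (1 - nu) * (eta * R + Kc)"
    using sum_cavg_le[of N] nu unfolding R_def Kc_def by (intro mult_left_mono) auto
  moreover have "(1 - nu) * (eta * R) \<le> (1 - nu) * R"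
    using R_nonneg nu eta by (intro mult_left_mono mult_left_le_one_le) auto
  moreover have "(1 - nu) * (eta * R + Kc) = (1 - nu) * (eta * R) + (1 - nu) * Kc"
    and "(1 - nu) * R = R - nu * R"
    by (simp_all add: algebra_simps)
  ultimately show "2 * (\<Sum>n = 1..N. tau n * gap n) + energy (N + 1)
      \<le> energy 1 + resid 1 (y 1) + (1 - nu) * (M * eta * (\<Sum>k = 1..M. resid k (y k)))"
    using energy_telescope[of N] unfolding R_def[symmetric] Kc_def[symmetric] by linarith
qed

lemma energy_le_bound:
  assumes K: "\<And>N. 2 * (\<Sum>n = 1..N. tau n * gap n) + energy (N + 1) \<le> K"
  shows "energy (N + 1) \<le> K"
proof -
  have "0 \<le> (\<Sum>n = 1..N. tau n * gap n)"
    using tau_pos gap_nonneg by (intro sum_nonneg mult_nonneg_nonneg) (auto intro: less_imp_le)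
  thus ?thesis using K[of N] by linarith
qed

lemma y_bounded: "bounded (range y)"
proof -
  obtain K where K: "\<And>N. 2 * (\<Sum>n = 1..N. tau n * gap n) + energy (N + 1) \<le> K"
    by (fact energy_bounded)
  have "(1 / beta) * (norm (y n - ys))\<^sup>2 \<le> K" for n
  proof -
    have "0 \<le> psi / (psi - 1) * (norm (z (n + 2) - xs))\<^sup>2"
      using psi by (intro mult_nonneg_nonneg divide_nonneg_nonneg) auto
    thus ?thesis using energy_le_bound[OF K, of n] unfolding energy_def by simp
  qed
  hence "norm (y n - ys) \<le> sqrt (beta * K)" for n
    using beta by (intro real_le_rsqrt) (simp add: field_simps)
  hence "range y \<subseteq> cball ys (sqrt (beta * K))"
    by (auto simp: dist_norm norm_minus_commute)
  thus ?thesis using bounded_cball bounded_subset by blast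
qed

lemma z_bounded: "bounded (range z)"
proof -
  obtain K where K: "\<And>N. 2 * (\<Sum>n = 1..N. tau n * gap n) + energy (N + 1) \<le> K"
    by (fact energy_bounded)
  have "psi / (psi - 1) * (norm (z (n + 2) - xs))\<^sup>2 \<le> K" for n
  proof -
    have "0 \<le> (1 / beta) * (norm (y n - ys))\<^sup>2" using beta by simp
    thus ?thesis using energy_le_bound[OF K, of n] unfolding energy_def by (simp add: numeral_2_eq_2)
  qed
  hence "norm (z (n + 2) - xs) \<le> sqrt ((psi - 1) / psi * K)" for n
    using psi by (intro real_le_rsqrt) (simp add: field_simps)
  hence "z ` {2..} \<subseteq> cball xs (sqrt ((psi - 1) / psi * K))"
    by (auto simp: dist_norm norm_minus_commute dest!: le_Suc_ex)
  hence "bounded (z ` {2..})" using bounded_cball bounded_subset by blast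
  moreover have "{..1} \<union> {2..} = (UNIV :: nat set)" by auto
  hence "range z = z ` {..1} \<union> z ` {2..}" by (metis image_Un)
  ultimately show ?thesis by (simp add: finite_imp_bounded)
qed

lemma x_eq_extrapolation: "x n = (psi / (psi - 1)) *\<^sub>R z (n + 1) - (1 / (psi - 1)) *\<^sub>R z n"
proof -
  have "psi * ((psi - 1) / psi) = psi - 1" "psi * (1 / psi) = 1" using psi by auto
  hence "psi *\<^sub>R z (n + 1) = (psi - 1) *\<^sub>R x n + z n"
    using z_step[of "n + 1"] by (simp add: scaleR_add_right)
  hence "(1 / (psi - 1)) *\<^sub>R (psi *\<^sub>R z (n + 1) - z n) = x n"
    using psi by simp
  thus ?thesis by (simp add: scaleR_diff_right)
qed

lemma x_bounded: "bounded (range x)"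
proof -
  obtain B where B: "\<And>n. norm (z n) \<le> B" using z_bounded unfolding bounded_iff by blast
  have "norm (x n) \<le> psi / (psi - 1) * B + 1 / (psi - 1) * B" for n
  proof -
    have "norm (x n) \<le> norm ((psi / (psi - 1)) *\<^sub>R z (n + 1)) + norm ((1 / (psi - 1)) *\<^sub>R z n)"
      by (subst x_eq_extrapolation) (rule norm_triangle_ineq4)
    also have "\<dots> = psi / (psi - 1) * norm (z (n + 1)) + 1 / (psi - 1) * norm (z n)"
      using psi by simp
    also have "\<dots> \<le> psi / (psi - 1) * B + 1 / (psi - 1) * B"
      using psi B by (intro add_mono mult_left_mono) auto
    finally show ?thesis .
  qed
  thus ?thesis unfolding bounded_iff by blast
qed

lemma delta_ge: "tau k / taumax \<le> delta k"
proof (cases "k = 0")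
  case True
  thus ?thesis using tau_le_taumax[of 0] taumax by (simp add: delta_def)
next
  case False
  have "tau k / taumax \<le> tau k / tau (k - 1)"
    using tau_pos tau_le_taumax taumax by (intro divide_left_mono) (auto intro: less_imp_le)
  thus ?thesis using False by (simp add: delta_def)
qed

lemma linesearch_terms_bounded:
  assumes y_le: "\<And>n. norm (y n) \<le> R"
  obtains Lyy Lxy Lxx where "0 \<le> Lyy" "0 < Lxy"
    and "\<And>n v. v \<in> edom F \<Longrightarrow> norm v \<le> R \<Longrightarrow>
           (norm (Phix (x n) v - Phix (x (n - 1)) (y (n - 1))))\<^sup>2
           \<le> 2 * Lxx\<^sup>2 * (norm (x n - x (n - 1)))\<^sup>2 + 2 * Lxy\<^sup>2 * (norm (v - y (n - 1)))\<^sup>2"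
    and "\<And>n v. v \<in> edom F \<Longrightarrow> norm v \<le> R \<Longrightarrow>
           Phi (x n) (y (n - 1)) + inner (Phiy (x n) (y (n - 1))) (v - y (n - 1)) - Phi (x n) v
           \<le> Lyy * (norm (v - y (n - 1)))\<^sup>2"
proof -
  obtain Rx where x_le: "\<And>n. norm (x n) \<le> Rx" using x_bounded unfolding bounded_iff by blast
  obtain Lyy Lxx Lxy where L: "0 \<le> Lyy" "0 < Lxy"
    and Lip: "\<forall>u \<in> cball 0 Rx \<inter> edom g. \<forall>u' \<in> cball 0 Rx \<inter> edom g.
              \<forall>v \<in> cball 0 R \<inter> edom F. \<forall>v' \<in> cball 0 R \<inter> edom F.
             norm (Phiy u v - Phiy u v') \<le> Lyy * norm (v - v') \<and>
             norm (Phix u v - Phix u' v') \<le> Lxx * norm (u - u') + Lxy * norm (v - v')"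
    using Phi_lip[rule_format, OF bounded_cball bounded_cball] by blast
  have mem: "x n \<in> cball 0 Rx \<inter> edom g" "y n \<in> cball 0 R \<inter> edom F" for n
    using x_le y_le x_in_edom y_in_edom by auto
  have "(norm (Phix (x n) v - Phix (x (n - 1)) (y (n - 1))))\<^sup>2
      \<le> 2 * Lxx\<^sup>2 * (norm (x n - x (n - 1)))\<^sup>2 + 2 * Lxy\<^sup>2 * (norm (v - y (n - 1)))\<^sup>2"
    if v: "v \<in> edom F" "norm v \<le> R" for n v
  proof -
    have "norm (Phix (x n) v - Phix (x (n - 1)) (y (n - 1)))
        \<le> Lxx * norm (x n - x (n - 1)) + Lxy * norm (v - y (n - 1))"
      using Lip[rule_format, OF mem(1) mem(1) _ mem(2)] v by simp
    hence "(norm (Phix (x n) v - Phix (x (n - 1)) (y (n - 1))))\<^sup>2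
        \<le> (Lxx * norm (x n - x (n - 1)) + Lxy * norm (v - y (n - 1)))\<^sup>2"
      by (intro power_mono) auto
    thus ?thesis using sum_squares_bound[of "Lxx * norm (x n - x (n - 1))" "Lxy * norm (v - y (n - 1))"]
      by (simp add: power2_sum power_mult_distrib)
  qed
  moreover have "Phi (x n) (y (n - 1)) + inner (Phiy (x n) (y (n - 1))) (v - y (n - 1)) - Phi (x n) v
      \<le> Lyy * (norm (v - y (n - 1)))\<^sup>2" if v: "v \<in> edom F" "norm v \<le> R" for n v
  proof -
    have "Phi (x n) (y (n - 1)) + inner (Phiy (x n) (y (n - 1))) (v - y (n - 1)) - Phi (x n) v
        \<le> norm (Phiy (x n) (y (n - 1)) - Phiy (x n) v) * norm (v - y (n - 1))"
      using concave_linearization_gap_le[OF Phi_ccv[rule_format, OF x_in_edom] v(1)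
          y_in_edom Phi_dy[rule_format, OF x_in_edom v(1)]] .
    also have "\<dots> \<le> Lyy * norm (v - y (n - 1)) * norm (v - y (n - 1))"
      using Lip[rule_format, OF mem(1) mem(1) mem(2)] v
      by (intro mult_right_mono) (auto simp: norm_minus_commute)
    finally show ?thesis by (simp add: power2_eq_square mult.assoc)
  qed
  ultimately show ?thesis by (rule that[OF L])
qed

lemma accept_small_steps:
  assumes y_le: "\<And>n. norm (y n) \<le> R"
  obtains tb0 where "0 < tb0"
    and "\<And>n t. 1 \<le> n \<Longrightarrow> 0 < t \<Longrightarrow> t \<le> tb0 \<Longrightarrow> norm (trial n t) \<le> R \<Longrightarrow> accept n t"
proof -
  obtain Lyy Lxy Lxx where L: "0 \<le> Lyy" "0 < Lxy"
    and th: "\<And>n v. v \<in> edom F \<Longrightarrow> norm v \<le> R \<Longrightarrow>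
           (norm (Phix (x n) v - Phix (x (n - 1)) (y (n - 1))))\<^sup>2
           \<le> 2 * Lxx\<^sup>2 * (norm (x n - x (n - 1)))\<^sup>2 + 2 * Lxy\<^sup>2 * (norm (v - y (n - 1)))\<^sup>2"
    and py: "\<And>n v. v \<in> edom F \<Longrightarrow> norm v \<le> R \<Longrightarrow>
           Phi (x n) (y (n - 1)) + inner (Phiy (x n) (y (n - 1))) (v - y (n - 1)) - Phi (x n) v
           \<le> Lyy * (norm (v - y (n - 1)))\<^sup>2"
    by (fact linesearch_terms_bounded[OF y_le])
  define tb0 where "tb0 = min (nu * omega * xi / (2 * (Lxx\<^sup>2 + 1) * taumax))
                              (nu / (beta * (2 * taumax * Lxy\<^sup>2 / xi + 2 * Lyy)))"
  have "0 < 2 * taumax * Lxy\<^sup>2 / xi + 2 * Lyy" using taumax L xi by (intro add_pos_nonneg) auto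
  moreover have "0 < 2 * (Lxx\<^sup>2 + 1) * taumax"
    using taumax by (intro mult_pos_pos add_nonneg_pos) auto
  ultimately have "0 < tb0"
    unfolding tb0_def using nu omega_gt_0 xi beta by (auto intro!: divide_pos_pos mult_pos_pos)
  moreover have "accept n t" if "1 \<le> n" and t: "0 < t" "t \<le> tb0" and v: "norm (trial n t) \<le> R"
    for n t
    using small_step_test_holds[OF t(1) tau_pos tau_le_taumax xi beta less_imp_le[OF omega_gt_0]
        L(2,1) nu(1) less_imp_le[OF nu(2)] cavg_nonneg th[OF trial_vi(1)[OF t(1)] v]
        py[OF trial_vi(1)[OF t(1)] v] delta_ge] t(2)
    unfolding accept_def resid_def tb0_def by simp
  ultimately show ?thesis using that by blast
qed

lemma trial_distance_le:
  assumes n: "1 \<le> n" and t: "tau n \<le> t"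
  shows "tau n * norm (trial n t - y (n - 1)) \<le> t * norm (y n - y (n - 1))"
proof -
  have t0: "0 < t" using tau_pos[of n] t by linarith
  have "(beta * tau n) * norm (trial n t - y (n - 1)) \<le> (beta * t) * norm (y n - y (n - 1))"
  proof (rule prox_path_distance_le)
    show "0 < beta * tau n" "beta * tau n \<le> beta * t" using beta tau_pos t by auto
    show "inner ((y (n - 1) + (beta * tau n) *\<^sub>R Phiy (x n) (y (n - 1))) - y n) (trial n t - y n)
        \<le> (beta * tau n) * (real_of_ereal (F (trial n t)) - real_of_ereal (F (y n)))"
      using y_vi[OF n trial_vi(1)[OF t0]] by simp
    show "inner ((y (n - 1) + (beta * t) *\<^sub>R Phiy (x n) (y (n - 1))) - trial n t) (y n - trial n t)
        \<le> (beta * t) * (real_of_ereal (F (y n)) - real_of_ereal (F (trial n t)))"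
      using trial_vi(2)[OF t0 y_in_edom] by simp
  qed
  thus ?thesis using beta by (simp add: mult.assoc)
qed

(* If backtracking went below mu tb0, the rejected step tau_n / mu was below tb0, and by
   trial_distance_le its trial point lies in the ball where such steps are accepted. *)
lemma tau_lower_step:
  assumes Ry: "\<And>k. norm (y k) \<le> Ry" and tb0: "0 < tb0"
    and acc: "\<And>k t. 1 \<le> k \<Longrightarrow> 0 < t \<Longrightarrow> t \<le> tb0 \<Longrightarrow> norm (trial k t) \<le> Ry + 2 * Ry / mu
                \<Longrightarrow> accept k t"
    and n: "1 \<le> n"
  shows "min (tau (n - 1)) (mu * tb0) \<le> tau n"
proof -
  obtain i where i: "tau n = tbar n * mu ^ i" and rejected: "\<forall>j<i. \<not> accept n (tbar n * mu ^ j)"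
    using linesearch[OF n] by blast
  show ?thesis
  proof (cases i)
    case 0
    have "tau (n - 1) \<le> tbar n"
      unfolding tbar_def using phi tau_pos tau_le_taumax by simp
    thus ?thesis using i 0 by simp
  next
    case (Suc j)
    define tp where "tp = tbar n * mu ^ j"
    have tau_tp: "tau n = mu * tp" unfolding tp_def i Suc by simp
    have tp: "0 < tp" "tau n \<le> tp" using tau_pos[of n] mu unfolding tau_tp by (auto simp: mult_le_cancel_right1 zero_less_mult_iff)
    show ?thesis
    proof (rule ccontr)
      assume "\<not> ?thesis"
      hence "mu * tp < mu * tb0" unfolding tau_tp by simp
      hence "tp \<le> tb0" using mu by simp
      have "mu * tp * norm (trial n tp - y (n - 1)) \<le> tp * norm (y n - y (n - 1))"
        using trial_distance_le[OF n tp(2)] unfolding tau_tp .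
      hence "mu * norm (trial n tp - y (n - 1)) \<le> norm (y n - y (n - 1))"
        using tp(1) by (simp add: mult.commute mult.left_commute)
      also have "\<dots> \<le> 2 * Ry" using norm_triangle_ineq4[of "y n" "y (n - 1)"] Ry[of n] Ry[of "n - 1"] by simp
      finally have "norm (trial n tp - y (n - 1)) \<le> 2 * Ry / mu" using mu by (simp add: field_simps)
      hence "norm (trial n tp) \<le> Ry + 2 * Ry / mu"
        using norm_triangle_sub[of "trial n tp" "y (n - 1)"] Ry[of "n - 1"] by simp
      hence "accept n tp" using acc[OF n tp(1) \<open>tp \<le> tb0\<close>] by blast
      thus False using rejected Suc unfolding tp_def by blast
    qed
  qed
qed

lemma tau_lower_bound:
  obtains tmin where "0 < tmin" "\<And>n. tmin \<le> tau n"
proof -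
  obtain Ry where Ry: "\<And>n. norm (y n) \<le> Ry" using y_bounded unfolding bounded_iff by blast
  have "0 \<le> Ry" using Ry[of 0] norm_ge_zero[of "y 0"] by linarith
  hence "0 \<le> 2 * Ry / mu" using mu by simp
  hence "norm (y n) \<le> Ry + 2 * Ry / mu" for n using Ry[of n] by simp
  then obtain tb0 where tb0: "0 < tb0"
    and acc: "\<And>k t. 1 \<le> k \<Longrightarrow> 0 < t \<Longrightarrow> t \<le> tb0 \<Longrightarrow> norm (trial k t) \<le> Ry + 2 * Ry / mu
                \<Longrightarrow> accept k t"
    using accept_small_steps by blast
  have "min (tau 0) (mu * tb0) \<le> tau n" for n
  proof (induction n)
    case (Suc n)
    thus ?case using tau_lower_step[OF Ry tb0 acc, of "Suc n"] by simp
  qed simp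
  moreover have "0 < min (tau 0) (mu * tb0)" using tau_pos tb0 mu by simp
  ultimately show ?thesis using that by blast
qed

lemma ergodic_average_gap_le:
  assumes N: "1 \<le> N"
  defines "s \<equiv> \<Sum>n = 1..N. tau n"
  shows "Lag g F Phi ((1 / s) *\<^sub>R (\<Sum>n = 1..N. tau n *\<^sub>R x n)) ys
           - Lag g F Phi xs ((1 / s) *\<^sub>R (\<Sum>n = 1..N. tau n *\<^sub>R y n))
         \<le> ereal ((\<Sum>n = 1..N. tau n * gap n) / s)"
proof -
  have s: "0 < s" unfolding s_def using N tau_pos by (intro sum_pos) auto
  have avg: "(1 / s) *\<^sub>R (\<Sum>n = 1..N. tau n *\<^sub>R p n) = (\<Sum>n = 1..N. (tau n / s) *\<^sub>R p n)"
    for p :: "nat \<Rightarrow> 'c::real_vector"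
    by (simp add: scaleR_sum_right divide_inverse_commute)
  have "(\<Sum>n = 1..N. tau n / s) = 1" using s unfolding s_def by (simp flip: sum_divide_distrib)
  hence "Lag g F Phi (\<Sum>n = 1..N. (tau n / s) *\<^sub>R x n) ys
           - Lag g F Phi xs (\<Sum>n = 1..N. (tau n / s) *\<^sub>R y n)
         \<le> ereal (\<Sum>n = 1..N. tau n / s * gap n)"
    unfolding gap_def
    using saddle_gap_average[OF g_pcc(1,3) F_pcc(1,3) Phi_cvx[rule_format, OF saddle_point(2)]
        Phi_ccv[rule_format, OF saddle_point(1)] saddle_point(1,2), of "{1..N}" "\<lambda>n. tau n / s"]
      N s tau_pos x_in_edom y_in_edom by (simp add: less_imp_le)
  also have "(\<Sum>n = 1..N. tau n / s * gap n) = (\<Sum>n = 1..N. tau n * gap n) / s"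
    by (simp add: sum_divide_distrib)
  finally show ?thesis unfolding avg .
qed

theorem ergodic_rate:
  "\<exists>C1 > 0. \<forall>N::nat \<ge> 1.
     (let s = (\<Sum>n = 1..N. tau n);
          xh = (1 / s) *\<^sub>R (\<Sum>n = 1..N. tau n *\<^sub>R x n);
          yh = (1 / s) *\<^sub>R (\<Sum>n = 1..N. tau n *\<^sub>R y n)
      in Lag g F Phi xh ys - Lag g F Phi xs yh \<le> ereal (C1 / real N))"
proof -
  obtain K where K: "\<And>N. 2 * (\<Sum>n = 1..N. tau n * gap n) + energy (N + 1) \<le> K"
    by (fact energy_bounded)
  have energy_nonneg: "0 \<le> energy n" for n
    unfolding energy_def using psi beta by (intro add_nonneg_nonneg mult_nonneg_nonneg) auto
  have weighted: "(\<Sum>n = 1..N. tau n * gap n) \<le> K / 2" for N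
    using K[of N] energy_nonneg[of "N + 1"] by linarith
  obtain tmin where tmin: "0 < tmin" "\<And>n. tmin \<le> tau n" by (fact tau_lower_bound)
  define C1 where "C1 = K / (2 * tmin) + 1"
  have "0 < C1" unfolding C1_def using weighted[of 0] tmin by (auto intro!: add_nonneg_pos)
  moreover have "(\<Sum>n = 1..N. tau n * gap n) / (\<Sum>n = 1..N. tau n) \<le> C1 / real N" if N: "1 \<le> N" for N
  proof -
    have "real N * tmin \<le> (\<Sum>n = 1..N. tau n)" using sum_bounded_below[of "{1..N}" tmin tau] tmin by simp
    moreover have "0 < real N * tmin" using N tmin by simp
    ultimately have "(\<Sum>n = 1..N. tau n * gap n) / (\<Sum>n = 1..N. tau n) \<le> (K / 2) / (real N * tmin)"
      using weighted[of N] weighted[of 0] by (intro frac_le) auto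
    also have "\<dots> \<le> C1 / real N" unfolding C1_def using N tmin by (simp add: field_simps)
    finally show ?thesis .
  qed
  ultimately show ?thesis
    unfolding Let_def using ergodic_average_gap_le by (meson order.trans ereal_less_eq(3))
qed

end

theorem theorem3p2:
  fixes g :: "'a::euclidean_space \<Rightarrow> ereal" and f :: "'b::euclidean_space \<Rightarrow> ereal"
    and Phi :: "'a \<Rightarrow> 'b \<Rightarrow> real" and Phix :: "'a \<Rightarrow> 'b \<Rightarrow> 'a" and Phiy :: "'a \<Rightarrow> 'b \<Rightarrow> 'b"
    and psi xi phi taumax nu mu eta beta :: real and M :: nat
    and x :: "nat \<Rightarrow> 'a" and y :: "nat \<Rightarrow> 'b" and z :: "nat \<Rightarrow> 'a" and tau :: "nat \<Rightarrow> real"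
    and xs :: 'a and ys :: 'b
  assumes f_pcc: "proper_fn f" "closed_fn f" "convex_fn f"
    and g_pcc: "proper_fn g" "closed_fn g" "convex_fn g"
    and Phi_cont: "continuous_on (edom g \<times> edom (fconj f)) (\<lambda>(u, v). Phi u v)"
    \<comment> \<open>(A1)\<close>
    and A1: "saddle_set g (fconj f) Phix Phiy \<noteq> {}"
    and A1_fin: "\<forall>(u, v) \<in> saddle_set g (fconj f) Phix Phiy. \<bar>Lag g (fconj f) Phi u v\<bar> \<noteq> \<infinity>"
    \<comment> \<open>(A2)\<close>
    and Phi_cvx: "\<forall>v \<in> edom (fconj f). convex_on (edom g) (\<lambda>u. Phi u v)"
    and Phi_ccv: "\<forall>u \<in> edom g. concave_on (edom (fconj f)) (\<lambda>v. Phi u v)"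
    and Phi_dx: "\<forall>u \<in> edom g. \<forall>v \<in> edom (fconj f).
                   ((\<lambda>w. Phi w v) has_derivative (\<lambda>h. inner (Phix u v) h)) (at u)"
    and Phi_dy: "\<forall>u \<in> edom g. \<forall>v \<in> edom (fconj f).
                   ((\<lambda>w. Phi u w) has_derivative (\<lambda>h. inner (Phiy u v) h)) (at v)"
    and Phi_lip: "\<forall>X Y. bounded X \<longrightarrow> bounded Y \<longrightarrow>
        (\<exists>Lyy Lxx Lxy. Lyy \<ge> 0 \<and> Lxx \<ge> 0 \<and> Lxy > 0 \<and>
          (\<forall>u \<in> X \<inter> edom g. \<forall>u' \<in> X \<inter> edom g. \<forall>v \<in> Y \<inter> edom (fconj f).
             \<forall>v' \<in> Y \<inter> edom (fconj f).
             norm (Phiy u v - Phiy u v') \<le> Lyy * norm (v - v') \<and>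
             norm (Phix u v - Phix u' v') \<le> Lxx * norm (u - u') + Lxy * norm (v - v')))"
    \<comment> \<open>parameters of PDAc-L\<close>
    and psi: "1 < psi" "psi < 1 + sqrt 3"
    and xi: "xi > 0" and phi: "phi > 1"
    and omega: "2 * psi - xi - psi ^ 3 * phi / (1 + psi) > 0"
    and taumax: "taumax > 0" and nu: "0 < nu" "nu < 1" and mu: "0 < mu" "mu < 1"
    and eta: "0 \<le> eta" "eta < 1" and M: "M \<ge> 1" and beta: "beta > 0"
    and init: "x 0 \<in> edom g" "y 0 \<in> edom (fconj f)" "0 < tau 0" "tau 0 \<le> taumax"
    and iter: "pdacl g (fconj f) Phi Phix Phiy psi xi phi taumax nu mu eta M beta x y z tau"
    and sad: "(xs, ys) \<in> saddle_set g (fconj f) Phix Phiy"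
  shows "\<exists>C1 > 0. \<forall>N::nat \<ge> 1.
           (let s = (\<Sum>n = 1..N. tau n);
                xh = (1 / s) *\<^sub>R (\<Sum>n = 1..N. tau n *\<^sub>R x n);
                yh = (1 / s) *\<^sub>R (\<Sum>n = 1..N. tau n *\<^sub>R y n)
            in Lag g (fconj f) Phi xh ys - Lag g (fconj f) Phi xs yh \<le> ereal (C1 / real N))"
proof -
  have fconj_pcc: "proper_fn (fconj f)" "closed_fn (fconj f)" "convex_fn (fconj f)"
    using proper_fn_fconj[OF f_pcc(1)] closed_fn_fconj[OF f_pcc(1)] convex_fn_fconj[OF f_pcc(1)] sad
    unfolding saddle_set_def by auto
  interpret pdacl_run g "fconj f" Phi Phix Phiy psi xi phi taumax nu mu eta beta M x y z tau xs ys
    by unfold_locales (fact fconj_pcc assms)+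
  show ?thesis by (rule ergodic_rate)
qed

end
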